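(* Suppose that $A\in\widetilde{\mathcal{M}''_0}[\tau_{s^*}]$ and $\mathcal{M}''_0\mathcal{D}\subset\mathcal{D}$. Then the following are equivalent: (i) $A\in\widetilde{\mathcal{M}''_0}[\tau_{s^*}]_{cq+}$; (ii) $(I+A)^{-1}\in\mathcal{U}(\mathcal{M}''_0)_+$; (iii) $\overline{A}$ is a positive self-adjoint operator.
   Context: Let $\mathcal{D}$ be a dense subspace of a Hilbert space $\mathcal{H}$, $I$ the identity. $\mathcal{L}^\dagger(\mathcal{D},\mathcal{H})$ is the space of linear $X:\mathcal{D}\to\mathcal{H}$ with $\mathcal{D}(X^* )\supseteq\mathcal{D}$, involution $X^\dagger=X^*\lceil\mathcal{D}$. $\mathcal{M}_0$ is a unital $C^*$-algebra of bounded operators on $\mathcal{H}$ with $\mathcal{M}_0\mathcal{D}\subset\mathcal{D}$; $\mathcal{M}''_0$ is its bicommutant (a von Neumann algebra), elements identified with restrictions to $\mathcal{D}$. $\tau_{s^*}$: topology of seminorms $X\mapsto\sum_{\xi\in F}(\|X\xi\|+\|X^\dagger\xi\|)$, $F\subset\mathcal{D}$ finite. $\widetilde{\mathcal{M}''_0}[\tau_{s^*}]$ is realized as the set of $\tau_{s^*}$-limits in $\mathcal{L}^\dagger(\mathcal{D},\mathcal{H})$ of nets in $\mathcal{M}''_0$; products with elements $X$ of $\mathcal{M}''_0$ are limits of $X_\alpha X$, $XX_\alpha$. $\widetilde{\mathcal{M}''_0}[\tau_{s^*}]_{cq+}$ is the set of $\tau_{s^*}$-limits of nets of mutually commuting positive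 elements of $\mathcal{M}''_0$. $\mathcal{U}(\mathcal{M}''_0)_+=\{X\in\mathcal{M}''_0:X\ge0,\|X\|\le1\}$; "$(I+A)^{-1}\in\mathcal{U}(\mathcal{M}''_0)_+$" means there is $Y\in\mathcal{U}(\mathcal{M}''_0)_+$ with $(I+A)Y=Y(I+A)=I$. *)

theory Defs
  imports "HOL-Analysis.Analysis"
begin

class cplx_vector = real_vector +
  fixes scaleC :: "complex \<Rightarrow> 'a \<Rightarrow> 'a"  (infixr \<open>*\<^sub>C\<close> 75)
  assumes scaleC_add_right: "c *\<^sub>C (x + y) = c *\<^sub>C x + c *\<^sub>C y"
    and scaleC_add_left: "(c + d) *\<^sub>C x = c *\<^sub>C x + d *\<^sub>C x"
    and scaleC_scaleC: "c *\<^sub>C (d *\<^sub>C x) = (c * d) *\<^sub>C x"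
    and scaleC_one: "1 *\<^sub>C x = x"
    and scaleR_scaleC: "scaleR r x = (complex_of_real r) *\<^sub>C x"

class cplx_inner = cplx_vector + real_normed_vector +
  fixes cinner :: "'a \<Rightarrow> 'a \<Rightarrow> complex"
  assumes cinner_commute: "cinner x y = cnj (cinner y x)"
    and cinner_add_left: "cinner (x + y) z = cinner x z + cinner y z"
    and cinner_scaleC_left: "cinner (c *\<^sub>C x) y = cnj c * cinner x y"
    and cinner_ge_zero: "0 \<le> Re (cinner x x)"
    and cinner_eq_zero_iff: "cinner x x = 0 \<longleftrightarrow> x = 0"
    and norm_eq_sqrt_cinner: "norm x = sqrt (Re (cinner x x))"

class cplx_hilbert = cplx_inner + complete_space

definition csubspace :: "'h::cplx_vector set \<Rightarrow> bool" where
  "csubspace S \<longleftrightarrow> 0 \<in> S \<and> (\<forall>x\<in>S. \<forall>y\<in>S. x + y \<in> S) \<and> (\<forall>c. \<forall>x\<in>S. c *\<^sub>C x \<in> S)"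

definition dense_subspace :: "'h::cplx_hilbert set \<Rightarrow> bool" where
  "dense_subspace D \<longleftrightarrow> csubspace D \<and> closure D = UNIV"

definition clinear_on :: "'h::cplx_vector set \<Rightarrow> ('h \<Rightarrow> 'h) \<Rightarrow> bool" where
  "clinear_on D X \<longleftrightarrow> (\<forall>x\<in>D. \<forall>y\<in>D. X (x + y) = X x + X y) \<and> (\<forall>c. \<forall>x\<in>D. X (c *\<^sub>C x) = c *\<^sub>C X x)"

definition adj_dom :: "'h::cplx_hilbert set \<Rightarrow> ('h \<Rightarrow> 'h) \<Rightarrow> 'h set" where
  "adj_dom D X = {\<eta>. \<exists>\<zeta>. \<forall>\<xi>\<in>D. cinner (X \<xi>) \<eta> = cinner \<xi> \<zeta>}"

text \<open>The adjoint X* (meaningful on adj_dom D X, D dense); X-dagger is its restriction to D.\<close>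
definition adj :: "'h::cplx_hilbert set \<Rightarrow> ('h \<Rightarrow> 'h) \<Rightarrow> 'h \<Rightarrow> 'h" where
  "adj D X \<eta> = (THE \<zeta>. \<forall>\<xi>\<in>D. cinner (X \<xi>) \<eta> = cinner \<xi> \<zeta>)"

text \<open>L-dagger(D,H): linear maps D -> H whose adjoint domain contains D.
  Only values on D matter.\<close>
definition Ldag :: "'h::cplx_hilbert set \<Rightarrow> ('h \<Rightarrow> 'h) set" where
  "Ldag D = {X. clinear_on D X \<and> D \<subseteq> adj_dom D X}"

definition bounded_clinear_op :: "('h::cplx_hilbert \<Rightarrow> 'h) \<Rightarrow> bool" where
  "bounded_clinear_op T \<longleftrightarrow> clinear_on UNIV T \<and> (\<exists>K. \<forall>x. norm (T x) \<le> norm x * K)"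

definition positive_op :: "('h::cplx_hilbert \<Rightarrow> 'h) \<Rightarrow> bool" where
  "positive_op T \<longleftrightarrow> (\<forall>x. Im (cinner x (T x)) = 0 \<and> 0 \<le> Re (cinner x (T x)))"

definition unital_cstar_algebra :: "('h::cplx_hilbert \<Rightarrow> 'h) set \<Rightarrow> bool" where
  "unital_cstar_algebra M \<longleftrightarrow>
     (\<forall>T\<in>M. bounded_clinear_op T) \<and> id \<in> M \<and>
     (\<forall>S\<in>M. \<forall>T\<in>M. (\<lambda>x. S x + T x) \<in> M \<and> S \<circ> T \<in> M) \<and>
     (\<forall>c. \<forall>T\<in>M. (\<lambda>x. c *\<^sub>C T x) \<in> M) \<and>
     (\<forall>T\<in>M. adj UNIV T \<in> M) \<and>
     (\<forall>T. bounded_clinear_op T \<and> (\<forall>e>0. \<exists>S\<in>M. onorm (\<lambda>x. T x - S x) < e) \<longrightarrow> T \<in> M)"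

definition commutant :: "('h::cplx_hilbert \<Rightarrow> 'h) set \<Rightarrow> ('h \<Rightarrow> 'h) set" where
  "commutant M = {S. bounded_clinear_op S \<and> (\<forall>T\<in>M. S \<circ> T = T \<circ> S)}"

definition bicommutant :: "('h::cplx_hilbert \<Rightarrow> 'h) set \<Rightarrow> ('h \<Rightarrow> 'h) set" where
  "bicommutant M = commutant (commutant M)"

text \<open>A is the tau_{s*}-limit in L-dagger(D,H) of a net with values in S:
  the net is the filter F (proper, eventually in S); convergence in tau_{s*}
  means X xi -> A xi and X-dagger xi -> A-dagger xi for every xi in D.\<close>
definition tau_s_star_limit_of :: "'h::cplx_hilbert set \<Rightarrow> ('h \<Rightarrow> 'h) set \<Rightarrow> ('h \<Rightarrow> 'h) \<Rightarrow> bool" where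
  "tau_s_star_limit_of D S A \<longleftrightarrow> A \<in> Ldag D \<and>
     (\<exists>F :: ('h \<Rightarrow> 'h) filter. F \<noteq> bot \<and> eventually (\<lambda>X. X \<in> S) F \<and>
        (\<forall>\<xi>\<in>D. ((\<lambda>X. X \<xi>) \<longlongrightarrow> A \<xi>) F \<and> ((\<lambda>X. adj D X \<xi>) \<longlongrightarrow> adj D A \<xi>) F))"

definition tau_closure :: "'h::cplx_hilbert set \<Rightarrow> ('h \<Rightarrow> 'h) set \<Rightarrow> ('h \<Rightarrow> 'h) set" where
  "tau_closure D M = {A. tau_s_star_limit_of D M A}"

definition tau_closure_cq_pos :: "'h::cplx_hilbert set \<Rightarrow> ('h \<Rightarrow> 'h) set \<Rightarrow> ('h \<Rightarrow> 'h) set" where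
  "tau_closure_cq_pos D M = {A. \<exists>S. S \<subseteq> M \<and> (\<forall>X\<in>S. positive_op X) \<and>
        (\<forall>X\<in>S. \<forall>Y\<in>S. X \<circ> Y = Y \<circ> X) \<and> tau_s_star_limit_of D S A}"

definition unit_ball_pos :: "('h::cplx_hilbert \<Rightarrow> 'h) set \<Rightarrow> ('h \<Rightarrow> 'h) set" where
  "unit_ball_pos M = {X\<in>M. positive_op X \<and> onorm X \<le> 1}"

definition op_closure_graph :: "'h::cplx_hilbert set \<Rightarrow> ('h \<Rightarrow> 'h) \<Rightarrow> ('h \<times> 'h) set" where
  "op_closure_graph D A = closure {(\<xi>, A \<xi>) | \<xi>. \<xi> \<in> D}"

definition is_graph :: "('h \<times> 'h) set \<Rightarrow> bool" where
  "is_graph G \<longleftrightarrow> (\<forall>x y z. (x, y) \<in> G \<and> (x, z) \<in> G \<longrightarrow> y = z)"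

definition graph_adjoint :: "('h::cplx_hilbert \<times> 'h) set \<Rightarrow> ('h \<times> 'h) set" where
  "graph_adjoint G = {(\<eta>, \<zeta>). \<forall>(\<xi>, x)\<in>G. cinner x \<eta> = cinner \<xi> \<zeta>}"

definition positive_selfadjoint_graph :: "('h::cplx_hilbert \<times> 'h) set \<Rightarrow> bool" where
  "positive_selfadjoint_graph G \<longleftrightarrow> is_graph G \<and> closure (Domain G) = UNIV \<and>
     graph_adjoint G = G \<and> (\<forall>(\<xi>, x)\<in>G. Im (cinner \<xi> x) = 0 \<and> 0 \<le> Re (cinner \<xi> x))"

end

theory Submission
  imports Defs
begin

text \<open>
  (ii) \<open>\<Longrightarrow>\<close> (iii): if \<open>Y = (I + A)\<inverse>\<close> is a positive contraction in \<open>M = M\<^sub>0''\<close>, then the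
  closure of \<open>A\<close> has the graph \<open>{(Y \<eta>, \<eta> - Y \<eta>)}\<close> of \<open>Y\<inverse> - I\<close>, which is positive
  self-adjoint because \<open>Y\<close> is a positive injective contraction.

  (iii) \<open>\<Longrightarrow>\<close> (ii): the resolvent of the positive self-adjoint closure of \<open>A\<close> is a positive
  contraction. Being a \<open>\<tau>\<^sub>s\<^sub>*\<close>-limit of elements of \<open>M\<close>, \<open>A\<close> is affiliated with \<open>M\<close>: every \<open>S\<close>
  in the commutant \<open>M\<^sub>0'\<close> maps the graph of the closure into itself, hence commutes with the
  resolvent, which therefore lies in \<open>M\<close>.

  (i) \<open>\<Longrightarrow>\<close> (ii): if commuting positive \<open>X\<^sub>\<alpha> \<in> M\<close> converge to \<open>A\<close>, their resolvents are
  commuting positive contractions with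
  \<open>\<parallel>(I + X\<^sub>\<alpha>)\<inverse> \<eta> - (I + X\<^sub>\<beta>)\<inverse> \<eta>\<parallel> \<le> \<parallel>X\<^sub>\<alpha> \<eta> - X\<^sub>\<beta> \<eta>\<parallel>\<close>, so they converge strongly, and
  the limit inverts \<open>I + A\<close> on \<open>D\<close>.

  (ii) \<open>\<Longrightarrow>\<close> (i): \<open>T = I - Y\<close> is a positive contraction without fixed points, so
  \<open>T\<^sup>n \<rightarrow> 0\<close> strongly; the partial sums \<open>\<Sum>\<^sub>k\<^sub>=\<^sub>1\<^sup>n T\<^sup>k\<close> are commuting positive elements of
  \<open>M\<close>, and on \<open>Y u\<close> they telescope to \<open>T u - T\<^sup>n\<^sup>+\<^sup>1 u \<rightarrow> T u\<close>, which is \<open>A \<xi>\<close> for \<open>u = \<xi> + A \<xi>\<close>.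
\<close>

lemma scaleC_zero_left [simp]: "(0::complex) *\<^sub>C (x::'a::cplx_vector) = 0"
  using scaleR_scaleC[of 0 x] by simp

lemma scaleC_zero_right [simp]: "c *\<^sub>C (0::'a::cplx_vector) = 0"
proof -
  have "c *\<^sub>C (0::'a) = c *\<^sub>C 0 + c *\<^sub>C 0"
    using scaleC_add_right[of c 0 0] by simp
  then show ?thesis by simp
qed

lemma scaleC_minus_one: "(-1::complex) *\<^sub>C (x::'a::cplx_vector) = - x"
  using scaleR_scaleC[of "-1" x] by simp

lemma cinner_add_right: "cinner x (y + z) = cinner x y + cinner (x::'a::cplx_inner) z"
  by (metis cinner_add_left cinner_commute complex_cnj_add)

lemma cinner_scaleC_right: "cinner x (c *\<^sub>C y) = c * cinner (x::'a::cplx_inner) y"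
  by (metis cinner_commute cinner_scaleC_left complex_cnj_cnj complex_cnj_mult)

lemma cinner_zero_left [simp]: "cinner 0 (x::'a::cplx_inner) = 0"
  using cinner_add_left[of 0 0 x] by simp

lemma cinner_zero_right [simp]: "cinner (x::'a::cplx_inner) 0 = 0"
  using cinner_add_right[of x 0 0] by simp

lemma cinner_minus_right: "cinner x (- y::'a::cplx_inner) = - cinner x y"
  using cinner_add_right[of x y "-y"] by (simp add: eq_neg_iff_add_eq_0 add.commute)

lemma cinner_diff_left: "cinner (x - y) (z::'a::cplx_inner) = cinner x z - cinner y z"
  using cinner_add_left[of x "-y" z] cinner_scaleC_left[of "-1" y z]
  by (simp add: scaleC_minus_one)

lemma cinner_diff_right: "cinner x (y - z::'a::cplx_inner) = cinner x y - cinner x z"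
  using cinner_add_right[of x y "-z"] by (simp add: cinner_minus_right)

lemma cinner_scaleR_left: "cinner (r *\<^sub>R x) (y::'a::cplx_inner) = of_real r * cinner x y"
  by (simp add: scaleR_scaleC cinner_scaleC_left)

lemma cinner_scaleR_right: "cinner x (r *\<^sub>R y::'a::cplx_inner) = of_real r * cinner x y"
  by (simp add: scaleR_scaleC cinner_scaleC_right)

lemma cinner_self: "cinner x (x::'a::cplx_inner) = complex_of_real ((norm x)\<^sup>2)"
proof -
  have "Im (cinner x x) = 0"
    using arg_cong[OF cinner_commute[of x x], of Im] by simp
  moreover have "Re (cinner x x) = (norm x)\<^sup>2"
    using norm_eq_sqrt_cinner[of x] cinner_ge_zero[of x] by simp
  ultimately show ?thesis by (simp add: complex_eq_iff)
qed

lemma norm_scaleC: "norm (c *\<^sub>C (x::'a::cplx_inner)) = cmod c * norm x"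
proof -
  have "cinner (c *\<^sub>C x) (c *\<^sub>C x) = (cnj c * c) * cinner x x"
    by (simp add: cinner_scaleC_left cinner_scaleC_right mult.assoc)
  also have "cnj c * c = complex_of_real ((cmod c)\<^sup>2)"
    by (subst mult.commute) (rule complex_norm_square[symmetric])
  finally have "complex_of_real ((norm (c *\<^sub>C x))\<^sup>2) = complex_of_real ((cmod c)\<^sup>2) * complex_of_real ((norm x)\<^sup>2)"
    unfolding cinner_self .
  also have "\<dots> = complex_of_real ((cmod c * norm x)\<^sup>2)"
    by (simp only: of_real_mult[symmetric] power_mult_distrib)
  finally have "(norm (c *\<^sub>C x))\<^sup>2 = (cmod c * norm x)\<^sup>2"
    by (simp only: of_real_eq_iff)
  then show ?thesis by (simp add: power2_eq_iff_nonneg)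
qed

lemma norm_add_power2: "(norm (x + y::'a::cplx_inner))\<^sup>2 = (norm x)\<^sup>2 + 2 * Re (cinner x y) + (norm y)\<^sup>2"
proof -
  have "complex_of_real ((norm (x+y))\<^sup>2) = cinner (x+y) (x+y)" by (rule cinner_self[symmetric])
  also have "\<dots> = cinner x x + cinner x y + cinner y x + cinner y y"
    by (simp add: cinner_add_left cinner_add_right)
  finally have e: "complex_of_real ((norm (x+y))\<^sup>2) = cinner x x + cinner x y + cinner y x + cinner y y" .
  have "(norm (x+y))\<^sup>2 = Re (cinner x x + cinner x y + cinner y x + cinner y y)"
    using arg_cong[OF e, of Re] by simp
  moreover have "Re (cinner y x) = Re (cinner x y)" using cinner_commute[of y x] by simp
  ultimately show ?thesis by (simp add: cinner_self)
qed

lemma norm_diff_power2: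
  "(norm (x - y::'a::cplx_inner))\<^sup>2 = (norm x)\<^sup>2 - 2 * Re (cinner x y) + (norm y)\<^sup>2"
  using norm_add_power2[of x "-y"] by (simp add: cinner_minus_right)

text \<open>Minimise the form along the line \<open>x + \<mu> y\<close> with \<open>\<mu>\<close> a real multiple of \<open>cnj (B x y)\<close>.\<close>
lemma sesquilinear_cauchy_schwarz:
  fixes B :: "'a::cplx_vector \<Rightarrow> 'a \<Rightarrow> complex"
  assumes add_left: "\<And>x y z. B (x + y) z = B x z + B y z"
    and scaleC_left: "\<And>c x y. B (c *\<^sub>C x) y = cnj c * B x y"
    and hermitian: "\<And>x y. B x y = cnj (B y x)"
    and nonneg: "\<And>x. 0 \<le> Re (B x x)"
  shows "(cmod (B x y))\<^sup>2 \<le> Re (B x x) * Re (B y y)"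
proof -
  have add_right: "B x (y + z) = B x y + B x z" for x y z
    by (metis add_left complex_cnj_add hermitian)
  have scaleC_right: "B x (c *\<^sub>C y) = c * B x y" for x y c
    by (metis complex_cnj_cnj complex_cnj_mult hermitian scaleC_left)
  define b where "b = B x y"
  have along_line: "0 \<le> Re (B x x) - 2 * t * (cmod b)\<^sup>2 + t\<^sup>2 * (cmod b)\<^sup>2 * Re (B y y)"
    for t :: real
  proof -
    define \<mu> where "\<mu> = - complex_of_real t * cnj b"
    have \<mu>_b: "\<mu> * b = - complex_of_real (t * (cmod b)\<^sup>2)"
      unfolding \<mu>_def of_real_mult complex_norm_square by (simp add: mult.commute mult.left_commute)
    have \<mu>_\<mu>: "cnj \<mu> * \<mu> = complex_of_real (t\<^sup>2 * (cmod b)\<^sup>2)"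
      unfolding \<mu>_def of_real_mult complex_norm_square by (simp add: power2_eq_square mult.commute mult.left_commute)
    have "B (x + \<mu> *\<^sub>C y) (x + \<mu> *\<^sub>C y)
        = B x x + \<mu> * b + cnj (\<mu> * b) + (cnj \<mu> * \<mu>) * B y y"
      using hermitian[of y x]
      by (simp add: add_left add_right scaleC_left scaleC_right b_def algebra_simps)
    also have "\<dots> = B x x - 2 * complex_of_real (t * (cmod b)\<^sup>2)
        + complex_of_real (t\<^sup>2 * (cmod b)\<^sup>2) * B y y"
      unfolding \<mu>_b \<mu>_\<mu> by simp
    finally have "Re (B (x + \<mu> *\<^sub>C y) (x + \<mu> *\<^sub>C y))
        = Re (B x x) - 2 * t * (cmod b)\<^sup>2 + t\<^sup>2 * (cmod b)\<^sup>2 * Re (B y y)"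
      by simp
    then show ?thesis using nonneg[of "x + \<mu> *\<^sub>C y"] by simp
  qed
  show ?thesis
  proof (cases "Re (B y y) = 0")
    case True
    then have "b = 0"
      using along_line[of "(Re (B x x) + 1) / (2 * (cmod b)\<^sup>2)"] by (cases "b = 0") simp_all
    then show ?thesis using nonneg[of x] nonneg[of y] by (simp add: b_def)
  next
    case False
    then have pos: "Re (B y y) > 0" using nonneg[of y] by simp
    have "0 \<le> Re (B x x) - (cmod b)\<^sup>2 / Re (B y y)"
      using along_line[of "1 / Re (B y y)"] pos by (simp add: power2_eq_square field_simps)
    then show ?thesis using pos by (simp add: b_def field_simps)
  qed
qed

lemma cinner_cauchy_schwarz: "cmod (cinner x (y::'a::cplx_inner)) \<le> norm x * norm y"
proof -
  have "(cmod (cinner x y))\<^sup>2 \<le> Re (cinner x x) * Re (cinner y y)"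
    by (rule sesquilinear_cauchy_schwarz)
      (rule cinner_add_left cinner_scaleC_left cinner_commute cinner_ge_zero)+
  also have "\<dots> = (norm x * norm y)\<^sup>2" by (simp add: cinner_self power_mult_distrib)
  finally show ?thesis by (rule power2_le_imp_le) simp
qed

lemma bounded_bilinear_cinner: "bounded_bilinear (cinner :: 'a::cplx_inner \<Rightarrow> 'a \<Rightarrow> complex)"
proof
  show "\<exists>K. \<forall>a b::'a. norm (cinner a b) \<le> norm a * norm b * K"
    by (rule exI[of _ 1]) (simp add: cinner_cauchy_schwarz)
qed (simp_all add: cinner_add_left cinner_add_right cinner_scaleR_left cinner_scaleR_right
       scaleR_conv_of_real)

lemmas tendsto_cinner = bounded_bilinear.tendsto[OF bounded_bilinear_cinner]

lemma cinner_sum_right: "cinner x (\<Sum>a\<in>A. f a) = (\<Sum>a\<in>A. cinner (x::'a::cplx_inner) (f a))"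
  by (rule bounded_bilinear.sum_right[OF bounded_bilinear_cinner])

lemma bounded_clinear_op_add: "bounded_clinear_op T \<Longrightarrow> T (x + y) = T x + T y"
  by (simp add: bounded_clinear_op_def clinear_on_def)

lemma bounded_clinear_op_scaleC: "bounded_clinear_op T \<Longrightarrow> T (c *\<^sub>C x) = c *\<^sub>C T x"
  by (simp add: bounded_clinear_op_def clinear_on_def)

lemma bounded_clinear_op_zero: "bounded_clinear_op (T::'a::cplx_hilbert \<Rightarrow> 'a) \<Longrightarrow> T 0 = 0"
  using bounded_clinear_op_scaleC[of T 0 0] by simp

lemma bounded_clinear_op_minus:
  "bounded_clinear_op (T::'a::cplx_hilbert \<Rightarrow> 'a) \<Longrightarrow> T (- x) = - T x"
  using bounded_clinear_op_scaleC[of T "-1" x] by (simp add: scaleC_minus_one)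

lemma bounded_clinear_op_diff:
  "bounded_clinear_op (T::'a::cplx_hilbert \<Rightarrow> 'a) \<Longrightarrow> T (x - y) = T x - T y"
  using bounded_clinear_op_add[of T x "-y"] by (simp add: bounded_clinear_op_minus)

lemma bounded_clinear_op_sum:
  "bounded_clinear_op (T::'a::cplx_hilbert \<Rightarrow> 'a) \<Longrightarrow> T (\<Sum>a\<in>A. f a) = (\<Sum>a\<in>A. T (f a))"
  by (induction A rule: infinite_finite_induct)
    (simp_all add: bounded_clinear_op_zero bounded_clinear_op_add)

lemma bounded_clinear_opI:
  assumes "\<And>x y. T (x + y) = T x + T y" "\<And>c x. T (c *\<^sub>C x) = c *\<^sub>C T x"
    and "\<And>x. norm (T x) \<le> norm x * K"
  shows "bounded_clinear_op T"
  using assms unfolding bounded_clinear_op_def clinear_on_def by blast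

lemma bounded_clinear_op_bound:
  assumes "bounded_clinear_op T"
  obtains K where "K \<ge> 0" "\<And>x. norm (T x) \<le> norm x * K"
proof -
  obtain K where "\<forall>x. norm (T x) \<le> norm x * K"
    using assms by (auto simp: bounded_clinear_op_def)
  then have "norm (T x) \<le> norm x * max K 0" for x
    by (meson max.cobounded1 mult_left_mono norm_ge_zero order_trans)
  then show ?thesis using that[of "max K 0"] by simp
qed

lemma bounded_clinear_op_bounded_linear:
  "bounded_clinear_op (T::'a::cplx_hilbert \<Rightarrow> 'a) \<Longrightarrow> bounded_linear T"
proof -
  assume T: "bounded_clinear_op T"
  then obtain K where "\<And>x. norm (T x) \<le> norm x * K" using bounded_clinear_op_bound by blast
  then show ?thesis
    by (intro bounded_linear_intro[where K=K])
      (simp_all add: scaleR_scaleC bounded_clinear_op_add[OF T] bounded_clinear_op_scaleC[OF T])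
qed

lemma bounded_clinear_op_tendsto:
  "bounded_clinear_op (T::'a::cplx_hilbert \<Rightarrow> 'a) \<Longrightarrow> (f \<longlongrightarrow> a) F \<Longrightarrow> ((\<lambda>x. T (f x)) \<longlongrightarrow> T a) F"
  using bounded_linear.tendsto[OF bounded_clinear_op_bounded_linear] by blast

lemma bounded_clinear_op_id: "bounded_clinear_op (id::'a::cplx_hilbert \<Rightarrow> 'a)"
  by (rule bounded_clinear_opI[where K=1]) auto

lemma bounded_clinear_op_comp:
  assumes S: "bounded_clinear_op (S::'a::cplx_hilbert \<Rightarrow> 'a)" and T: "bounded_clinear_op T"
  shows "bounded_clinear_op (S \<circ> T)"
proof -
  obtain K where K: "K \<ge> 0" "\<And>x. norm (S x) \<le> norm x * K" using S bounded_clinear_op_bound by blast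
  obtain L where L: "L \<ge> 0" "\<And>x. norm (T x) \<le> norm x * L" using T bounded_clinear_op_bound by blast
  have "norm (S (T x)) \<le> norm x * (L * K)" for x
    using K(2)[of "T x"] mult_right_mono[OF L(2)[of x] K(1)] by (simp add: mult.assoc)
  then show ?thesis
    using S T by (intro bounded_clinear_opI[where K="L * K"])
      (auto simp: bounded_clinear_op_add bounded_clinear_op_scaleC)
qed

lemma bounded_clinear_op_plus:
  assumes S: "bounded_clinear_op (S::'a::cplx_hilbert \<Rightarrow> 'a)" and T: "bounded_clinear_op T"
  shows "bounded_clinear_op (\<lambda>x. S x + T x)"
proof -
  obtain K where K: "\<And>x. norm (S x) \<le> norm x * K" using S bounded_clinear_op_bound by blast
  obtain L where L: "\<And>x. norm (T x) \<le> norm x * L" using T bounded_clinear_op_bound by blast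
  have "norm (S x + T x) \<le> norm x * (K + L)" for x
    using norm_triangle_ineq[of "S x" "T x"] K[of x] L[of x] by (simp add: algebra_simps)
  then show ?thesis
    using S T by (intro bounded_clinear_opI[where K="K + L"])
      (auto simp: bounded_clinear_op_add bounded_clinear_op_scaleC scaleC_add_right)
qed

lemma bounded_clinear_op_scale:
  assumes T: "bounded_clinear_op (T::'a::cplx_hilbert \<Rightarrow> 'a)"
  shows "bounded_clinear_op (\<lambda>x. c *\<^sub>C T x)"
proof -
  obtain L where L: "L \<ge> 0" "\<And>x. norm (T x) \<le> norm x * L" using T bounded_clinear_op_bound by blast
  have "norm (c *\<^sub>C T x) \<le> norm x * (cmod c * L)" for x
    using mult_left_mono[OF L(2)[of x], of "cmod c"] by (simp add: norm_scaleC algebra_simps)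
  then show ?thesis
    using T by (intro bounded_clinear_opI[where K="cmod c * L"])
      (auto simp: bounded_clinear_op_add bounded_clinear_op_scaleC scaleC_add_right scaleC_scaleC
        mult.commute)
qed

lemma bounded_clinear_op_funpow:
  "bounded_clinear_op (T::'a::cplx_hilbert \<Rightarrow> 'a) \<Longrightarrow> bounded_clinear_op (T ^^ k)"
  by (induction k) (simp_all add: bounded_clinear_op_id bounded_clinear_op_comp)

lemma onorm_le_1_imp_norm_le:
  assumes "bounded_clinear_op (T::'a::cplx_hilbert \<Rightarrow> 'a)" and "onorm T \<le> 1"
  shows "norm (T x) \<le> norm x"
  using onorm[OF bounded_clinear_op_bounded_linear[OF assms(1)], of x]
    mult_right_mono[OF assms(2) norm_ge_zero[of x]] by simp

lemma dense_subspace_orthogonal: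
  assumes D: "dense_subspace (D::'a::cplx_hilbert set)" and orth: "\<And>\<xi>. \<xi> \<in> D \<Longrightarrow> cinner \<xi> u = 0"
  shows "u = 0"
proof -
  have "u \<in> closure D" using D by (simp add: dense_subspace_def)
  then obtain x where x: "\<And>n. x n \<in> D" "x \<longlonglongrightarrow> u" by (auto simp: closure_sequential)
  have "(\<lambda>n. cinner (x n) u) \<longlonglongrightarrow> cinner u u" by (rule tendsto_cinner[OF x(2) tendsto_const])
  then have "cinner u u = 0" using orth x(1) by (simp add: LIMSEQ_const_iff)
  then show ?thesis by (simp add: cinner_eq_zero_iff)
qed

lemma dense_subspace_cinner_ext:
  assumes "dense_subspace (D::'a::cplx_hilbert set)" and "\<And>\<xi>. \<xi> \<in> D \<Longrightarrow> cinner \<xi> u = cinner \<xi> v"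
  shows "u = v"
  using dense_subspace_orthogonal[OF assms(1), of "u - v"] assms(2) by (simp add: cinner_diff_right)

lemma dense_subspace_UNIV: "dense_subspace (UNIV::'a::cplx_hilbert set)"
  by (simp add: dense_subspace_def csubspace_def)

lemma cinner_ext: "(\<And>x. cinner x a = cinner x (b::'a::cplx_hilbert)) \<Longrightarrow> a = b"
  using dense_subspace_cinner_ext[OF dense_subspace_UNIV] by blast

lemma adj_eqI:
  assumes D: "dense_subspace (D::'a::cplx_hilbert set)"
    and "\<forall>\<xi>\<in>D. cinner (X \<xi>) \<eta> = cinner \<xi> \<zeta>"
  shows "adj D X \<eta> = \<zeta>"
  unfolding adj_def
  by (rule the_equality) (use assms dense_subspace_cinner_ext[OF D] in auto)

lemma adj_cinner:
  assumes "dense_subspace (D::'a::cplx_hilbert set)" and "\<eta> \<in> adj_dom D X" and "\<xi> \<in> D"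
  shows "cinner (X \<xi>) \<eta> = cinner \<xi> (adj D X \<eta>)"
  using assms adj_eqI[OF assms(1)] by (auto simp: adj_dom_def)

lemma adj_hermitian:
  assumes "dense_subspace (D::'a::cplx_hilbert set)" and "\<And>x y. cinner (T x) y = cinner x (T y)"
  shows "adj D T \<eta> = T \<eta>"
  by (rule adj_eqI) (simp_all add: assms)

section \<open>The projection theorem and the Riesz representation\<close>

lemma csubspace_add: "csubspace K \<Longrightarrow> x \<in> K \<Longrightarrow> y \<in> K \<Longrightarrow> x + y \<in> K"
  by (simp add: csubspace_def)

lemma csubspace_scaleC: "csubspace K \<Longrightarrow> x \<in> K \<Longrightarrow> c *\<^sub>C x \<in> K"
  by (simp add: csubspace_def)

lemma csubspace_scaleR: "csubspace (K::'a::cplx_vector set) \<Longrightarrow> x \<in> K \<Longrightarrow> r *\<^sub>R x \<in> K"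
  by (simp add: scaleR_scaleC csubspace_scaleC)

lemma Cauchy_if_dist_power2_le:
  fixes k :: "nat \<Rightarrow> 'a::metric_space"
  assumes \<delta>: "\<delta> \<longlonglongrightarrow> 0" and close: "\<And>n m. (dist (k n) (k m))\<^sup>2 \<le> \<delta> n + \<delta> m"
  shows "Cauchy k"
proof (rule metric_CauchyI)
  fix e :: real assume "e > 0"
  then have "e\<^sup>2 / 2 > 0" by simp
  then obtain N where N: "\<And>n. n \<ge> N \<Longrightarrow> \<bar>\<delta> n\<bar> < e\<^sup>2 / 2"
    using \<delta> unfolding LIMSEQ_iff real_norm_def by (metis diff_zero)
  have "dist (k m) (k n) < e" if "m \<ge> N" "n \<ge> N" for m n
  proof -
    have "(dist (k m) (k n))\<^sup>2 < e\<^sup>2" using close[of m n] N[OF that(1)] N[OF that(2)] by linarith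
    then show ?thesis using \<open>e > 0\<close> by (simp add: power_less_imp_less_base)
  qed
  then show "\<exists>M. \<forall>m\<ge>M. \<forall>n\<ge>M. dist (k m) (k n) < e" by blast
qed

text \<open>A minimising sequence is Cauchy by the parallelogram law, since the midpoint of two of
  its terms lies in \<open>K\<close> and hence is no closer to \<open>x\<close> than the infimum.\<close>
lemma closed_csubspace_nearest_point:
  fixes K :: "'a::cplx_hilbert set"
  assumes S: "csubspace K" and C: "closed K"
  obtains p where "p \<in> K" "\<And>k. k \<in> K \<Longrightarrow> norm (x - p) \<le> norm (x - k)"
proof -
  define f where "f k = (norm (x - k))\<^sup>2" for k
  define d where "d = Inf (f ` K)"
  have bdd: "bdd_below (f ` K)" by (rule bdd_belowI[of _ 0]) (auto simp: f_def)
  have d_le: "d \<le> f k" if "k \<in> K" for k using cInf_lower[OF _ bdd] that by (simp add: d_def)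
  have "\<exists>k. k \<in> K \<and> f k < d + inverse (real (Suc n))" for n
    using cInf_less_iff[OF _ bdd, of "d + inverse (real (Suc n))"] S
    by (auto simp: d_def csubspace_def)
  then obtain k where k: "\<And>n. k n \<in> K" "\<And>n. f (k n) < d + inverse (real (Suc n))"
    by metis
  have close: "(norm (k n - k m))\<^sup>2 \<le> 2 * inverse (real (Suc n)) + 2 * inverse (real (Suc m))"
    for n m
  proof -
    define mid where "mid = (1/2::real) *\<^sub>R (k n + k m)"
    have "mid \<in> K" unfolding mid_def by (intro csubspace_scaleR[OF S] csubspace_add[OF S] k)
    then have "d \<le> f mid" by (rule d_le)
    moreover have "(x - k m) + (x - k n) = 2 *\<^sub>R (x - mid)"
      by (simp add: mid_def scaleR_right_diff_distrib scaleR_right_distrib scaleR_2)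
    then have "(norm (k n - k m))\<^sup>2 + 4 * f mid = 2 * f (k m) + 2 * f (k n)"
      using norm_add_power2[of "x - k m" "x - k n"] norm_diff_power2[of "x - k m" "x - k n"]
      by (simp add: f_def power_mult_distrib)
    ultimately show ?thesis using k(2)[of n] k(2)[of m] by simp
  qed
  have "(\<lambda>n. 2 * inverse (real (Suc n))) \<longlonglongrightarrow> 0"
    using tendsto_mult_right_zero[OF LIMSEQ_inverse_real_of_nat, of 2] by simp
  then have "Cauchy k"
    by (rule Cauchy_if_dist_power2_le) (use close in \<open>simp only: dist_norm\<close>)
  then obtain p where p: "k \<longlonglongrightarrow> p" using Cauchy_convergent_iff convergent_def by blast
  have pK: "p \<in> K" using C k(1) p closed_sequential_limits by blast
  have fp: "f p \<le> d"
  proof (rule tendsto_le[OF trivial_limit_sequentially])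
    show "(\<lambda>n. f (k n)) \<longlonglongrightarrow> f p" unfolding f_def by (intro tendsto_intros p)
    show "(\<lambda>n. d + inverse (real (Suc n))) \<longlonglongrightarrow> d"
      using tendsto_add[OF tendsto_const LIMSEQ_inverse_real_of_nat, of d] by simp
    show "\<forall>\<^sub>F n in sequentially. f (k n) \<le> d + inverse (real (Suc n))"
      using k(2) by (simp add: less_imp_le)
  qed
  have "norm (x - p) \<le> norm (x - k')" if "k' \<in> K" for k'
    using order_trans[OF fp d_le[OF that]] unfolding f_def by (rule power2_le_imp_le) simp
  then show ?thesis by (rule that[OF pK])
qed

text \<open>If \<open>p\<close> is a nearest point, moving it by \<open>s cnj a k\<close> with \<open>a = \<langle>x - p, k\<rangle>\<close> and
  small \<open>s > 0\<close> would bring it closer to \<open>x\<close> unless \<open>a = 0\<close>.\<close>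
lemma nearest_point_orthogonal:
  fixes K :: "'a::cplx_hilbert set"
  assumes S: "csubspace K" and p: "p \<in> K" and nearest: "\<And>k. k \<in> K \<Longrightarrow> norm (x - p) \<le> norm (x - k)"
    and k: "k \<in> K"
  shows "cinner k (x - p) = 0"
proof (rule ccontr)
  assume "cinner k (x - p) \<noteq> 0"
  define w where "w = x - p"
  define a where "a = cinner w k"
  have A0: "(cmod a)\<^sup>2 > 0"
    using \<open>cinner k (x - p) \<noteq> 0\<close> cinner_commute[of k w] by (auto simp: a_def w_def)
  define s where "s = 1 / ((norm k)\<^sup>2 + 1)"
  have "(norm k)\<^sup>2 + 1 > 0" by (smt (verit) zero_le_power2)
  then have s0: "s > 0" and sN: "s * (norm k)\<^sup>2 < 1" by (simp_all add: s_def field_simps)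
  define t where "t = complex_of_real s * cnj a"
  have "p + t *\<^sub>C k \<in> K" by (intro csubspace_add[OF S] csubspace_scaleC[OF S] p k)
  then have "(norm w)\<^sup>2 \<le> (norm (w - t *\<^sub>C k))\<^sup>2"
    using nearest by (fastforce simp: w_def diff_diff_eq intro: power_mono)
  also have "\<dots> = (norm w)\<^sup>2 - 2 * Re (t * a) + (cmod t * norm k)\<^sup>2"
    by (simp add: norm_diff_power2 cinner_scaleC_right norm_scaleC a_def)
  also have "t * a = complex_of_real (s * (cmod a)\<^sup>2)"
    unfolding t_def of_real_mult complex_norm_square by (simp add: mult.commute mult.left_commute)
  also have "(cmod t * norm k)\<^sup>2 = (s * (cmod a)\<^sup>2) * (s * (norm k)\<^sup>2)"
    using s0 by (simp add: t_def norm_mult power_mult_distrib power2_eq_square)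
  finally have "2 * (s * (cmod a)\<^sup>2) \<le> (s * (cmod a)\<^sup>2) * (s * (norm k)\<^sup>2)" by simp
  moreover have "(s * (cmod a)\<^sup>2) * (s * (norm k)\<^sup>2) < (s * (cmod a)\<^sup>2) * 1"
    using sN s0 A0 by (intro mult_strict_left_mono) auto
  ultimately show False using s0 A0 by (smt (verit) mult_pos_pos)
qed

lemma closed_csubspace_projection:
  fixes K :: "'a::cplx_hilbert set"
  assumes "csubspace K" and "closed K"
  obtains p where "p \<in> K" "\<And>k. k \<in> K \<Longrightarrow> cinner k (x - p) = 0"
  using closed_csubspace_nearest_point[OF assms] nearest_point_orthogonal[OF assms(1)] by metis

lemma closed_csubspace_eq_UNIV:
  fixes K :: "'a::cplx_hilbert set"
  assumes "csubspace K" and "closed K" and "\<And>u. (\<forall>k\<in>K. cinner k u = 0) \<Longrightarrow> u = 0"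
  shows "K = UNIV"
proof -
  have "x \<in> K" for x
    using closed_csubspace_projection[OF assms(1,2), of x] assms(3)[of "x - _"]
    by (metis diff_eq_eq eq_iff_diff_eq_0)
  then show ?thesis by blast
qed

lemma riesz_representation:
  fixes f :: "'a::cplx_hilbert \<Rightarrow> complex"
  assumes add: "\<And>x y. f (x + y) = f x + f y" and scale: "\<And>c x. f (c *\<^sub>C x) = c * f x"
    and bound: "\<And>x. cmod (f x) \<le> norm x * B"
  obtains z where "\<And>x. f x = cinner z x"
proof (cases "\<forall>x. f x = 0")
  case True then show ?thesis using that[of 0] by simp
next
  case False
  then obtain x0 where x0: "f x0 \<noteq> 0" by blast
  have "bounded_linear f"
    by (rule bounded_linear_intro[where K=B])
      (use add bound in \<open>auto simp: scaleR_scaleC scale scaleR_conv_of_real\<close>)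
  then have closed: "closed {x. f x = 0}"
    by (intro closed_Collect_eq linear_continuous_on continuous_on_const)
  have f0: "f 0 = 0" using scale[of 0 0] by simp
  then have "csubspace {x. f x = 0}" unfolding csubspace_def using add scale by auto
  then obtain p where "f p = 0" and p_orth: "\<And>k. f k = 0 \<Longrightarrow> cinner k (x0 - p) = 0"
    by (rule closed_csubspace_projection[OF _ closed, of x0]) auto
  define u where "u = x0 - p"
  have f_diff: "f (a - b) = f a - f b" for a b
    using add[of a "-b"] scale[of "-1" b] by (simp add: scaleC_minus_one)
  have fu: "f u = f x0" using \<open>f p = 0\<close> by (simp add: u_def f_diff)
  then have "cinner u u \<noteq> 0" using x0 f0 by (auto simp: cinner_eq_zero_iff)
  have "f x = cinner (cnj (f u / cinner u u) *\<^sub>C u) x" for x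
  proof -
    have "f (x - (f x / f u) *\<^sub>C u) = 0" using x0 fu by (simp add: f_diff scale)
    then have "cinner u (x - (f x / f u) *\<^sub>C u) = 0"
      using p_orth cinner_commute[of u "x - (f x / f u) *\<^sub>C u"] by (simp add: u_def)
    then have "cinner u x = (f x / f u) * cinner u u"
      by (simp add: cinner_diff_right cinner_scaleC_right)
    then show ?thesis
      using \<open>cinner u u \<noteq> 0\<close> x0 fu by (simp add: cinner_scaleC_left field_simps)
  qed
  then show ?thesis by (rule that)
qed

lemma adj_UNIV:
  assumes T: "bounded_clinear_op (T::'a::cplx_hilbert \<Rightarrow> 'a)"
  shows "cinner (T x) y = cinner x (adj UNIV T y)"
proof -
  obtain K where K: "K \<ge> 0" "\<And>x. norm (T x) \<le> norm x * K"
    using T bounded_clinear_op_bound by blast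
  have bound: "cmod (cinner y (T x)) \<le> norm x * (norm y * K)" for x
    using cinner_cauchy_schwarz[of y "T x"] mult_left_mono[OF K(2)[of x], of "norm y"]
    by (simp add: algebra_simps)
  obtain z where z: "\<And>x. cinner y (T x) = cinner z x"
    by (rule riesz_representation[of "\<lambda>x. cinner y (T x)", OF _ _ bound])
      (simp_all add: bounded_clinear_op_add[OF T] bounded_clinear_op_scaleC[OF T]
        cinner_add_right cinner_scaleC_right)
  have "cinner (T x) y = cinner x z" for x
    using z[of x] cinner_commute[of "T x" y] cinner_commute[of x z] by simp
  then have "adj UNIV T y = z" by (simp add: adj_eqI[OF dense_subspace_UNIV])
  then show ?thesis using z cinner_commute[of "T x" y] cinner_commute[of x z] by simp
qed

lemma adj_UNIV_left:
  "bounded_clinear_op (T::'a::cplx_hilbert \<Rightarrow> 'a) \<Longrightarrow> cinner (adj UNIV T y) x = cinner y (T x)"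
  using adj_UNIV[of T x y] cinner_commute[of "T x" y] cinner_commute[of x "adj UNIV T y"] by simp

lemma adj_eq_adj_UNIV:
  "dense_subspace D \<Longrightarrow> bounded_clinear_op (T::'a::cplx_hilbert \<Rightarrow> 'a) \<Longrightarrow> adj D T \<eta> = adj UNIV T \<eta>"
  by (rule adj_eqI) (simp_all add: adj_UNIV)

lemma bounded_clinear_op_adj:
  assumes T: "bounded_clinear_op (T::'a::cplx_hilbert \<Rightarrow> 'a)"
  shows "bounded_clinear_op (adj UNIV T)"
proof -
  let ?A = "adj UNIV T"
  obtain K where K: "K \<ge> 0" "\<And>x. norm (T x) \<le> norm x * K"
    using T bounded_clinear_op_bound by blast
  have "norm (?A y) \<le> norm y * K" for y
  proof -
    have "(norm (?A y))\<^sup>2 = Re (cinner (T (?A y)) y)"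
      by (simp add: adj_UNIV[OF T] cinner_self)
    also have "\<dots> \<le> norm (T (?A y)) * norm y"
      using complex_Re_le_cmod cinner_cauchy_schwarz order_trans by blast
    also have "\<dots> \<le> norm (?A y) * (norm y * K)"
      using mult_right_mono[OF K(2)[of "?A y"] norm_ge_zero[of y]] by (simp add: algebra_simps)
    finally show ?thesis
      using K by (cases "norm (?A y) = 0") (simp_all add: power2_eq_square)
  qed
  then show ?thesis
    by (intro bounded_clinear_opI[where K=K] cinner_ext)
      (simp_all add: adj_UNIV[OF T, symmetric] cinner_add_right cinner_scaleC_right)
qed

lemma positive_op_hermitian:
  assumes T: "bounded_clinear_op (T::'a::cplx_hilbert \<Rightarrow> 'a)" and P: "positive_op T"
  shows "cinner (T x) y = cinner x (T y)"
proof -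
  define Q where "Q u v = cinner u (T v)" for u v
  have real: "Im (Q u u) = 0" for u using P by (simp add: positive_op_def Q_def)
  have "Q (x + y) (x + y) = Q x x + Q x y + Q y x + Q y y"
    by (simp add: Q_def bounded_clinear_op_add[OF T] cinner_add_left cinner_add_right)
  then have "Im (Q x y) + Im (Q y x) = 0" using real[of "x + y"] real[of x] real[of y] by simp
  moreover have "Q (x + \<i> *\<^sub>C y) (x + \<i> *\<^sub>C y) = Q x x + \<i> * Q x y - \<i> * Q y x + Q y y"
    by (simp add: Q_def bounded_clinear_op_add[OF T] bounded_clinear_op_scaleC[OF T]
        cinner_add_left cinner_add_right cinner_scaleC_left cinner_scaleC_right algebra_simps)
  then have "Re (Q x y) - Re (Q y x) = 0" using real[of "x + \<i> *\<^sub>C y"] real[of x] real[of y] by simp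
  ultimately have "cnj (Q y x) = Q x y" by (simp add: complex_eq_iff)
  then show ?thesis by (simp add: Q_def cinner_commute[of "T x" y])
qed

lemma adj_positive_op:
  "dense_subspace D \<Longrightarrow> bounded_clinear_op T \<Longrightarrow> positive_op (T::'a::cplx_hilbert \<Rightarrow> 'a) \<Longrightarrow> adj D T \<eta> = T \<eta>"
  by (rule adj_hermitian) (simp_all add: positive_op_hermitian)

lemma commutant_bounded: "X \<in> commutant N \<Longrightarrow> bounded_clinear_op X"
  by (simp add: commutant_def)

lemma commutant_commute: "X \<in> commutant N \<Longrightarrow> T \<in> N \<Longrightarrow> X (T x) = T (X x)"
  unfolding commutant_def by (auto dest!: fun_cong[where x=x])

lemma commutantI:
  "bounded_clinear_op X \<Longrightarrow> (\<And>T x. T \<in> N \<Longrightarrow> X (T x) = T (X x)) \<Longrightarrow> X \<in> commutant N"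
  unfolding commutant_def by (auto simp: fun_eq_iff)

lemma commutant_id: "(id::'a::cplx_hilbert \<Rightarrow> 'a) \<in> commutant N"
  by (rule commutantI) (auto simp: bounded_clinear_op_id)

lemma commutant_plus:
  "\<forall>U\<in>N. bounded_clinear_op U \<Longrightarrow> S \<in> commutant N \<Longrightarrow> T \<in> commutant N
    \<Longrightarrow> (\<lambda>x. S x + T x) \<in> commutant (N::('a::cplx_hilbert \<Rightarrow> 'a) set)"
  by (rule commutantI)
    (auto simp: bounded_clinear_op_plus commutant_bounded commutant_commute bounded_clinear_op_add)

lemma commutant_scale:
  "\<forall>U\<in>N. bounded_clinear_op U \<Longrightarrow> T \<in> commutant N
    \<Longrightarrow> (\<lambda>x. c *\<^sub>C T x) \<in> commutant (N::('a::cplx_hilbert \<Rightarrow> 'a) set)"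
  by (rule commutantI)
    (auto simp: bounded_clinear_op_scale commutant_bounded commutant_commute bounded_clinear_op_scaleC)

lemma commutant_comp:
  "S \<in> commutant N \<Longrightarrow> T \<in> commutant N \<Longrightarrow> S \<circ> T \<in> commutant (N::('a::cplx_hilbert \<Rightarrow> 'a) set)"
  by (rule commutantI) (auto simp: bounded_clinear_op_comp commutant_bounded commutant_commute)

lemma commutant_adj:
  assumes N_bounded: "\<forall>U\<in>N. bounded_clinear_op U" and N_adj: "\<forall>U\<in>N. adj UNIV U \<in> N"
    and S: "S \<in> commutant (N::('a::cplx_hilbert \<Rightarrow> 'a) set)"
  shows "adj UNIV S \<in> commutant N"
proof (rule commutantI)
  have SB: "bounded_clinear_op S" using S by (rule commutant_bounded)
  show "bounded_clinear_op (adj UNIV S)" by (rule bounded_clinear_op_adj[OF SB])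
  fix T y assume T: "T \<in> N"
  have TB: "bounded_clinear_op T" using N_bounded T by blast
  have "cinner x (adj UNIV S (T y)) = cinner x (T (adj UNIV S y))" for x
  proof -
    have "cinner x (adj UNIV S (T y)) = cinner (adj UNIV T (S x)) y"
      by (simp add: adj_UNIV[OF SB, symmetric] adj_UNIV_left[OF TB])
    also have "\<dots> = cinner (S (adj UNIV T x)) y"
      using commutant_commute[OF S] N_adj T by simp
    also have "\<dots> = cinner x (T (adj UNIV S y))"
      by (simp add: adj_UNIV[OF SB] adj_UNIV_left[OF TB])
    finally show ?thesis .
  qed
  then show "adj UNIV S (T y) = T (adj UNIV S y)" by (rule cinner_ext)
qed

lemma graph_adjointI:
  "(\<And>\<xi> x. (\<xi>, x) \<in> G \<Longrightarrow> cinner x \<eta> = cinner \<xi> \<zeta>) \<Longrightarrow> (\<eta>, \<zeta>) \<in> graph_adjoint G"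
  by (auto simp: graph_adjoint_def)

lemma graph_adjointD:
  "(\<eta>, \<zeta>) \<in> graph_adjoint G \<Longrightarrow> (\<xi>, x) \<in> G \<Longrightarrow> cinner x \<eta> = cinner \<xi> \<zeta>"
  by (auto simp: graph_adjoint_def)

lemma closed_graph_adjoint: "closed (graph_adjoint (G::('a::cplx_hilbert \<times> 'a) set))"
proof -
  have "graph_adjoint G = (\<Inter>(\<xi>, x)\<in>G. {p. cinner x (fst p) - cinner \<xi> (snd p) = 0})"
    by (auto simp: graph_adjoint_def)
  moreover have "closed {p. cinner x (fst p) - cinner \<xi> (snd p) = 0}" for \<xi> x :: 'a
    by (intro closed_Collect_eq continuous_on_diff continuous_on_const continuous_on_fst
        continuous_on_snd continuous_on_id bounded_bilinear.continuous_on[OF bounded_bilinear_cinner])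
  ultimately show ?thesis by auto
qed

lemma graph_adjoint_closure: "graph_adjoint (closure S) = graph_adjoint (S::('a::cplx_hilbert \<times> 'a) set)"
proof
  show "graph_adjoint (closure S) \<subseteq> graph_adjoint S"
    unfolding graph_adjoint_def using closure_subset by blast
  show "graph_adjoint S \<subseteq> graph_adjoint (closure S)"
  proof clarify
    fix \<eta> \<zeta> assume adjoint: "(\<eta>, \<zeta>) \<in> graph_adjoint S"
    have "closed {p. cinner (snd p) \<eta> - cinner (fst p) \<zeta> = 0}"
      by (intro closed_Collect_eq continuous_on_diff continuous_on_const continuous_on_fst
          continuous_on_snd continuous_on_id bounded_bilinear.continuous_on[OF bounded_bilinear_cinner])
    moreover have "S \<subseteq> {p. cinner (snd p) \<eta> - cinner (fst p) \<zeta> = 0}"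
      using graph_adjointD[OF adjoint] by auto
    ultimately have "closure S \<subseteq> {p. cinner (snd p) \<eta> - cinner (fst p) \<zeta> = 0}"
      by (rule closure_minimal[rotated])
    then show "(\<eta>, \<zeta>) \<in> graph_adjoint (closure S)" by (force intro: graph_adjointI)
  qed
qed

lemma graph_adjoint_add:
  "(a, b) \<in> graph_adjoint G \<Longrightarrow> (c, d) \<in> graph_adjoint G \<Longrightarrow> (a + c, b + d) \<in> graph_adjoint G"
  by (rule graph_adjointI) (simp add: cinner_add_right graph_adjointD)

lemma graph_adjoint_scaleC:
  "(a, b) \<in> graph_adjoint G \<Longrightarrow> (c *\<^sub>C a, c *\<^sub>C b) \<in> graph_adjoint G"
  by (rule graph_adjointI) (auto simp: cinner_scaleC_right dest: graph_adjointD)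

lemma graph_adjoint_diff:
  "(a, b) \<in> graph_adjoint G \<Longrightarrow> (c, d) \<in> graph_adjoint G \<Longrightarrow> (a - c, b - d) \<in> graph_adjoint G"
  by (rule graph_adjointI) (simp add: cinner_diff_right graph_adjointD)

lemma positive_contraction_norm_le:
  assumes T: "bounded_clinear_op (T::'a::cplx_hilbert \<Rightarrow> 'a)" and P: "positive_op T"
    and contraction: "\<And>x. norm (T x) \<le> norm x"
  shows "(norm (T x))\<^sup>2 \<le> Re (cinner x (T x))"
proof -
  define B where "B u v = cinner u (T v)" for u v
  have "(cmod (B (T x) x))\<^sup>2 \<le> Re (B (T x) (T x)) * Re (B x x)"
  proof (rule sesquilinear_cauchy_schwarz)
    show "B a b = cnj (B b a)" for a b
      using positive_op_hermitian[OF T P, of b a] cinner_commute[of "T b" a] cinner_commute[of b "T a"]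
      by (simp add: B_def)
  qed (simp_all add: B_def cinner_add_left cinner_scaleC_left P[unfolded positive_op_def])
  moreover have "cmod (B (T x) x) = (norm (T x))\<^sup>2" by (simp add: B_def cinner_self norm_power)
  moreover have "Re (B (T x) (T x)) \<le> (norm (T x))\<^sup>2"
  proof -
    have "Re (B (T x) (T x)) \<le> norm (T x) * norm (T (T x))"
      unfolding B_def using complex_Re_le_cmod cinner_cauchy_schwarz order_trans by blast
    also have "\<dots> \<le> norm (T x) * norm (T x)" by (simp add: contraction mult_left_mono)
    finally show ?thesis by (simp add: power2_eq_square)
  qed
  moreover have "0 \<le> Re (B x x)" using P by (simp add: B_def positive_op_def)
  ultimately have square: "(norm (T x))\<^sup>2 * (norm (T x))\<^sup>2 \<le> (norm (T x))\<^sup>2 * Re (B x x)"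
    unfolding power2_eq_square[of "(norm (T x))\<^sup>2", symmetric]
    by (metis mult_right_mono order_trans)
  show ?thesis
  proof (cases "norm (T x) = 0")
    case False
    then have "(norm (T x))\<^sup>2 > 0" by simp
    then have "(norm (T x))\<^sup>2 \<le> Re (B x x)" using square mult_le_cancel_left_pos by blast
    then show ?thesis by (simp add: B_def)
  qed (use \<open>0 \<le> Re (B x x)\<close> in \<open>simp add: B_def\<close>)
qed

lemma positive_contraction_complement:
  assumes Y: "bounded_clinear_op (Y::'a::cplx_hilbert \<Rightarrow> 'a)" and P: "positive_op Y"
    and contraction: "\<And>x. norm (Y x) \<le> norm x"
  shows "positive_op (\<lambda>x. x - Y x)" and "norm (x - Y x) \<le> norm x"
proof -
  have Re_le: "Re (cinner x (Y x)) \<le> (norm x)\<^sup>2" for x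
  proof -
    have "Re (cinner x (Y x)) \<le> norm x * norm (Y x)"
      using complex_Re_le_cmod cinner_cauchy_schwarz order_trans by blast
    also have "\<dots> \<le> norm x * norm x" by (simp add: contraction mult_left_mono)
    finally show ?thesis by (simp add: power2_eq_square)
  qed
  show "positive_op (\<lambda>x. x - Y x)"
    unfolding positive_op_def
    using P Re_le by (simp add: cinner_diff_right cinner_self positive_op_def)
  have "(norm (x - Y x))\<^sup>2 \<le> (norm x)\<^sup>2"
    using positive_contraction_norm_le[OF Y P contraction, of x] P[unfolded positive_op_def, rule_format, of x]
      norm_diff_power2[of x "Y x"] by linarith
  then show "norm (x - Y x) \<le> norm x" by (rule power2_le_imp_le) simp
qed

lemma funpow_hermitian:
  assumes "\<And>x y. cinner (T x) y = cinner x (T (y::'a::cplx_hilbert))"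
  shows "cinner ((T ^^ k) x) y = cinner x ((T ^^ k) y)"
  by (induction k arbitrary: x y) (simp_all add: assms funpow_swap1)

lemma cinner_funpow_funpow:
  assumes "\<And>x y. cinner (T x) y = cinner x (T (y::'a::cplx_hilbert))"
  shows "cinner ((T ^^ n) x) ((T ^^ m) x) = cinner x ((T ^^ (n + m)) x)"
  by (simp add: funpow_hermitian[OF assms] funpow_add)

lemma positive_op_funpow:
  assumes T: "bounded_clinear_op (T::'a::cplx_hilbert \<Rightarrow> 'a)" and P: "positive_op T"
  shows "positive_op (T ^^ k)"
  unfolding positive_op_def
proof
  fix x
  note hermitian = positive_op_hermitian[OF T P]
  show "Im (cinner x ((T ^^ k) x)) = 0 \<and> 0 \<le> Re (cinner x ((T ^^ k) x))"
  proof (cases "even k")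
    case True
    then obtain m where "k = 2 * m" by (rule evenE)
    then have "cinner x ((T ^^ k) x) = cinner ((T ^^ m) x) ((T ^^ m) x)"
      by (simp add: cinner_funpow_funpow[OF hermitian] mult_2)
    then show ?thesis by (simp add: cinner_self)
  next
    case False
    then obtain m where "k = 2 * m + 1" by (rule oddE)
    then have "cinner x ((T ^^ k) x) = cinner ((T ^^ m) x) (T ((T ^^ m) x))"
      using cinner_funpow_funpow[OF hermitian, of m x "Suc m"] by (simp add: mult_2)
    then show ?thesis using P by (simp add: positive_op_def)
  qed
qed

lemma positive_contraction_funpow_decseq:
  assumes T: "bounded_clinear_op (T::'a::cplx_hilbert \<Rightarrow> 'a)" and P: "positive_op T"
    and contraction: "\<And>x. norm (T x) \<le> norm x"
  shows "decseq (\<lambda>k. Re (cinner u ((T ^^ k) u)))"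
  unfolding decseq_Suc_iff
proof
  fix k
  note hermitian = positive_op_hermitian[OF T P]
  have even: "Re (cinner u ((T ^^ (2 * m)) u)) = (norm ((T ^^ m) u))\<^sup>2" for m
  proof -
    have "cinner u ((T ^^ (2 * m)) u) = cinner ((T ^^ m) u) ((T ^^ m) u)"
      using cinner_funpow_funpow[OF hermitian, of m u m] by (simp add: mult_2)
    then show ?thesis by (simp only: cinner_self Re_complex_of_real)
  qed
  have odd: "Re (cinner u ((T ^^ (2 * m + 1)) u)) = Re (cinner ((T ^^ m) u) (T ((T ^^ m) u)))" for m
    using cinner_funpow_funpow[OF hermitian, of m u "Suc m"] by (simp add: mult_2)
  show "Re (cinner u ((T ^^ Suc k) u)) \<le> Re (cinner u ((T ^^ k) u))"
  proof (cases "even k")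
    case True
    then obtain m where k: "k = 2 * m" by (rule evenE)
    have "Re (cinner ((T ^^ m) u) (T ((T ^^ m) u))) \<le> norm ((T ^^ m) u) * norm (T ((T ^^ m) u))"
      using complex_Re_le_cmod cinner_cauchy_schwarz order_trans by blast
    also have "\<dots> \<le> (norm ((T ^^ m) u))\<^sup>2"
      by (simp add: contraction mult_left_mono power2_eq_square)
    finally show ?thesis using even[of m] odd[of m] by (simp add: k)
  next
    case False
    then obtain m where k: "k = 2 * m + 1" by (rule oddE)
    have "Suc k = 2 * Suc m" by (simp add: k)
    then have "Re (cinner u ((T ^^ Suc k) u)) = (norm (T ((T ^^ m) u)))\<^sup>2"
      using even[of "Suc m"] by simp
    also have "\<dots> \<le> Re (cinner ((T ^^ m) u) (T ((T ^^ m) u)))"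
      by (rule positive_contraction_norm_le[OF T P contraction])
    finally show ?thesis using odd[of m] by (simp add: k)
  qed
qed

text \<open>With \<open>a k = Re \<langle>u, T\<^sup>k u\<rangle>\<close> decreasing and nonnegative, hence convergent,
  \<open>\<parallel>T\<^sup>n u - T\<^sup>m u\<parallel>\<^sup>2 = a (2n) - 2 a (n + m) + a (2m)\<close> tends to \<open>0\<close>.\<close>
lemma positive_contraction_funpow_Cauchy:
  assumes T: "bounded_clinear_op (T::'a::cplx_hilbert \<Rightarrow> 'a)" and P: "positive_op T"
    and contraction: "\<And>x. norm (T x) \<le> norm x"
  shows "Cauchy (\<lambda>n. (T ^^ n) u)"
proof (rule metric_CauchyI)
  fix e :: real assume e: "e > 0"
  define a where "a k = Re (cinner u ((T ^^ k) u))" for k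
  have "decseq a" unfolding a_def by (rule positive_contraction_funpow_decseq[OF T P contraction])
  moreover have "a k \<ge> 0" for k
    using positive_op_funpow[OF T P, of k] by (simp add: a_def positive_op_def)
  ultimately obtain L where "a \<longlonglongrightarrow> L" using decseq_convergent[of a 0] by blast
  then obtain N where N: "\<And>k. k \<ge> N \<Longrightarrow> \<bar>a k - L\<bar> < e\<^sup>2 / 4"
    using e unfolding LIMSEQ_iff by (metis divide_pos_pos real_norm_def zero_less_numeral zero_less_power)
  have "dist ((T ^^ n) u) ((T ^^ m) u) < e" if "n \<ge> N" "m \<ge> N" for n m
  proof -
    note cinner_funpow = cinner_funpow_funpow[OF positive_op_hermitian[OF T P]]
    have "(norm ((T ^^ n) u - (T ^^ m) u))\<^sup>2 = a (n + n) - 2 * a (n + m) + a (m + m)"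
      unfolding norm_diff_power2 a_def cinner_funpow[symmetric] by (simp add: cinner_self)
    also have "\<dots> < e\<^sup>2"
    proof -
      have "\<bar>a (n + n) - L\<bar> < e\<^sup>2 / 4" "\<bar>a (n + m) - L\<bar> < e\<^sup>2 / 4" "\<bar>a (m + m) - L\<bar> < e\<^sup>2 / 4"
        using N that by simp_all
      then show ?thesis unfolding abs_less_iff by linarith
    qed
    finally show ?thesis using e by (simp add: dist_norm power_less_imp_less_base)
  qed
  then show "\<exists>M. \<forall>m\<ge>M. \<forall>n\<ge>M. dist ((T ^^ m) u) ((T ^^ n) u) < e" by blast
qed

lemma positive_contraction_funpow_tendsto_0:
  assumes T: "bounded_clinear_op (T::'a::cplx_hilbert \<Rightarrow> 'a)" and P: "positive_op T"
    and contraction: "\<And>x. norm (T x) \<le> norm x" and no_fixed_point: "\<And>z. T z = z \<Longrightarrow> z = 0"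
  shows "(\<lambda>n. (T ^^ n) u) \<longlonglongrightarrow> 0"
proof -
  obtain z where z: "(\<lambda>n. (T ^^ n) u) \<longlonglongrightarrow> z"
    using positive_contraction_funpow_Cauchy[OF T P contraction] Cauchy_convergent_iff convergent_def
    by blast
  have "(\<lambda>n. T ((T ^^ n) u)) \<longlonglongrightarrow> T z" by (rule bounded_clinear_op_tendsto[OF T z])
  moreover have "(\<lambda>n. T ((T ^^ n) u)) \<longlonglongrightarrow> z" using LIMSEQ_Suc[OF z] by simp
  ultimately have "T z = z" by (rule LIMSEQ_unique)
  then have "z = 0" by (rule no_fixed_point)
  then show ?thesis using z by simp
qed

lemma funpow_partial_sums_telescope:
  assumes T: "bounded_clinear_op (T::'a::cplx_hilbert \<Rightarrow> 'a)"
  shows "(\<Sum>k\<in>{1..n}. (T ^^ k) (u - T u)) = T u - (T ^^ Suc n) u"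
proof (induction n)
  case (Suc n)
  have "(T ^^ Suc n) (u - T u) = (T ^^ Suc n) u - (T ^^ Suc (Suc n)) u"
    by (simp add: bounded_clinear_op_diff[OF bounded_clinear_op_funpow[OF T]] del: funpow.simps)
      (simp only: funpow_Suc_right comp_apply)
  then show ?case using Suc.IH by (simp del: funpow.simps)
qed simp

lemma funpow_partial_sums_tendsto:
  assumes T: "bounded_clinear_op (T::'a::cplx_hilbert \<Rightarrow> 'a)" and P: "positive_op T"
    and contraction: "\<And>x. norm (T x) \<le> norm x" and no_fixed_point: "\<And>z. T z = z \<Longrightarrow> z = 0"
  shows "(\<lambda>n. \<Sum>k\<in>{1..n}. (T ^^ k) (u - T u)) \<longlonglongrightarrow> T u"
proof -
  have "(\<lambda>n. T u - (T ^^ Suc n) u) \<longlonglongrightarrow> T u - 0"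
    using positive_contraction_funpow_tendsto_0[OF T P contraction no_fixed_point]
    by (intro tendsto_diff tendsto_const LIMSEQ_Suc)
  then show ?thesis unfolding funpow_partial_sums_telescope[OF T] by simp
qed

section \<open>Resolvents of positive self-adjoint graphs\<close>

text \<open>For a graph \<open>G\<close> of an operator \<open>A\<close>, \<open>graph_resolvent G\<close> is \<open>(I + A)\<inverse>\<close>.\<close>
definition graph_resolvent :: "('a::cplx_vector \<times> 'a) set \<Rightarrow> 'a \<Rightarrow> 'a" where
  "graph_resolvent G y = (THE \<xi>. \<exists>x. (\<xi>, x) \<in> G \<and> \<xi> + x = y)"

context
  fixes G :: "('a::cplx_hilbert \<times> 'a) set"
  assumes psa: "positive_selfadjoint_graph G"
begin

lemma positive_selfadjoint_graph_closed: "closed G"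
  using psa closed_graph_adjoint[of G] by (simp add: positive_selfadjoint_graph_def)

lemma positive_selfadjoint_graph_cinner:
  "(\<xi>, x) \<in> G \<Longrightarrow> Im (cinner \<xi> x) = 0 \<and> 0 \<le> Re (cinner \<xi> x)"
  using psa by (auto simp: positive_selfadjoint_graph_def)

lemma positive_selfadjoint_graph_add: "(a, b) \<in> G \<Longrightarrow> (c, d) \<in> G \<Longrightarrow> (a + c, b + d) \<in> G"
  using psa graph_adjoint_add[of a b G c d] by (simp add: positive_selfadjoint_graph_def)

lemma positive_selfadjoint_graph_diff: "(a, b) \<in> G \<Longrightarrow> (c, d) \<in> G \<Longrightarrow> (a - c, b - d) \<in> G"
  using psa graph_adjoint_diff[of a b G c d] by (simp add: positive_selfadjoint_graph_def)

lemma positive_selfadjoint_graph_scaleC: "(a, b) \<in> G \<Longrightarrow> (c *\<^sub>C a, c *\<^sub>C b) \<in> G"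
  using psa graph_adjoint_scaleC[of a b G c] by (simp add: positive_selfadjoint_graph_def)

lemma positive_selfadjoint_graph_norm_le:
  "(\<xi>, x) \<in> G \<Longrightarrow> (norm \<xi>)\<^sup>2 + (norm x)\<^sup>2 \<le> (norm (\<xi> + x))\<^sup>2"
  using positive_selfadjoint_graph_cinner by (simp add: norm_add_power2)

lemma positive_selfadjoint_graph_diff_norm_le:
  assumes "(\<xi>, x) \<in> G" "(\<xi>', x') \<in> G"
  shows "norm (\<xi> - \<xi>') \<le> norm ((\<xi> + x) - (\<xi>' + x'))"
proof -
  have "(norm (\<xi> - \<xi>'))\<^sup>2 \<le> (norm ((\<xi> - \<xi>') + (x - x')))\<^sup>2"
    using positive_selfadjoint_graph_norm_le[OF positive_selfadjoint_graph_diff[OF assms]]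
    by (smt (verit) zero_le_power2)
  then show ?thesis by (rule power2_le_imp_le[OF _ norm_ge_zero, THEN order_trans]) (simp add: algebra_simps)
qed

lemma closed_positive_selfadjoint_graph_sums: "closed {\<xi> + x | \<xi> x. (\<xi>, x) \<in> G}"
  unfolding closed_sequential_limits
proof (intro allI impI)
  fix y l assume "(\<forall>n. y n \<in> {\<xi> + x | \<xi> x. (\<xi>, x) \<in> G}) \<and> y \<longlonglongrightarrow> l"
  then have lim: "y \<longlonglongrightarrow> l" and "\<forall>n. \<exists>\<xi> x. (\<xi>, x) \<in> G \<and> y n = \<xi> + x" by blast+
  then obtain \<xi> x where in_G: "\<And>n. (\<xi> n, x n) \<in> G" and y: "\<And>n. y n = \<xi> n + x n"
    by metis
  have "Cauchy \<xi>"
  proof (rule metric_CauchyI)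
    fix e :: real assume "e > 0"
    then obtain M where "\<forall>m\<ge>M. \<forall>n\<ge>M. dist (y m) (y n) < e"
      using lim convergent_Cauchy convergent_def metric_CauchyD by blast
    then show "\<exists>M. \<forall>m\<ge>M. \<forall>n\<ge>M. dist (\<xi> m) (\<xi> n) < e"
      using positive_selfadjoint_graph_diff_norm_le[OF in_G in_G] y
      by (metis dist_norm order_le_less_trans)
  qed
  then obtain \<xi>\<^sub>0 where \<xi>\<^sub>0: "\<xi> \<longlonglongrightarrow> \<xi>\<^sub>0" using Cauchy_convergent_iff convergent_def by blast
  have "(\<lambda>n. x n) \<longlonglongrightarrow> l - \<xi>\<^sub>0"
    using tendsto_diff[OF lim \<xi>\<^sub>0] by (simp add: y)
  then have "(\<xi>\<^sub>0, l - \<xi>\<^sub>0) \<in> G"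
    using positive_selfadjoint_graph_closed in_G closed_sequential_limits tendsto_Pair[OF \<xi>\<^sub>0]
    by (metis (no_types, lifting))
  then show "l \<in> {\<xi> + x | \<xi> x. (\<xi>, x) \<in> G}" by force
qed

text \<open>The range of \<open>I + A\<close> is closed, and its orthogonal complement is trivial:
  \<open>u \<perp> ran (I + A)\<close> means \<open>(u, -u) \<in> A\<^sup>* = A\<close>, so that \<open>-\<parallel>u\<parallel>\<^sup>2 \<ge> 0\<close>.\<close>
lemma positive_selfadjoint_graph_sums_eq_UNIV: "{\<xi> + x | \<xi> x. (\<xi>, x) \<in> G} = UNIV"
proof (rule closed_csubspace_eq_UNIV)
  have "(0, 0) \<in> G"
    using psa positive_selfadjoint_graph_scaleC[of _ _ 0]
    by (cases "G = {}") (auto simp: positive_selfadjoint_graph_def)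
  then show "csubspace {\<xi> + x | \<xi> x. (\<xi>, x) \<in> G}"
    unfolding csubspace_def
  proof (intro conjI ballI allI)
    fix a b assume "a \<in> {\<xi> + x | \<xi> x. (\<xi>, x) \<in> G}" "b \<in> {\<xi> + x | \<xi> x. (\<xi>, x) \<in> G}"
    then obtain \<xi> x \<xi>' x' where "(\<xi>, x) \<in> G" "(\<xi>', x') \<in> G" "a = \<xi> + x" "b = \<xi>' + x'" by blast
    then show "a + b \<in> {\<xi> + x | \<xi> x. (\<xi>, x) \<in> G}"
      using positive_selfadjoint_graph_add[of \<xi> x \<xi>' x']
      by (intro CollectI exI[of _ "\<xi> + \<xi>'"] exI[of _ "x + x'"]) (simp add: algebra_simps)
  next
    fix c a assume "a \<in> {\<xi> + x | \<xi> x. (\<xi>, x) \<in> G}"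
    then obtain \<xi> x where "(\<xi>, x) \<in> G" "a = \<xi> + x" by blast
    then show "c *\<^sub>C a \<in> {\<xi> + x | \<xi> x. (\<xi>, x) \<in> G}"
      using positive_selfadjoint_graph_scaleC by (force simp: scaleC_add_right)
  qed force
  show "closed {\<xi> + x | \<xi> x. (\<xi>, x) \<in> G}" by (rule closed_positive_selfadjoint_graph_sums)
next
  fix u assume orth: "\<forall>k\<in>{\<xi> + x | \<xi> x. (\<xi>, x) \<in> G}. cinner k u = 0"
  have "(u, - u) \<in> graph_adjoint G"
  proof (rule graph_adjointI)
    fix \<xi> x assume "(\<xi>, x) \<in> G"
    then have "cinner (\<xi> + x) u = 0" using orth by blast
    then have "cinner \<xi> u + cinner x u = 0" by (simp add: cinner_add_left)
    then show "cinner x u = cinner \<xi> (- u)" by (simp add: cinner_minus_right eq_neg_iff_add_eq_0 add.commute)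
  qed
  then have "0 \<le> Re (cinner u (- u))"
    using psa positive_selfadjoint_graph_cinner by (simp add: positive_selfadjoint_graph_def)
  then show "u = 0" by (simp add: cinner_minus_right cinner_self)
qed

lemma graph_resolvent_in_graph: "(graph_resolvent G y, y - graph_resolvent G y) \<in> G"
  and graph_resolvent_eq: "(\<xi>, x) \<in> G \<Longrightarrow> graph_resolvent G (\<xi> + x) = \<xi>"
proof -
  have unique: "\<xi> = \<xi>'" if "(\<xi>, x) \<in> G" "(\<xi>', x') \<in> G" "\<xi> + x = \<xi>' + x'" for \<xi> x \<xi>' x'
    using positive_selfadjoint_graph_diff_norm_le[OF that(1,2)] that(3) by simp
  show "graph_resolvent G (\<xi> + x) = \<xi>" if "(\<xi>, x) \<in> G" for \<xi> x
    unfolding graph_resolvent_def using that unique by blast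
  have "y \<in> {\<xi> + x | \<xi> x. (\<xi>, x) \<in> G}" by (simp add: positive_selfadjoint_graph_sums_eq_UNIV)
  then obtain \<xi> x where "(\<xi>, x) \<in> G" "\<xi> + x = y" by blast
  moreover have "graph_resolvent G y = \<xi>"
    unfolding graph_resolvent_def using calculation unique by blast
  ultimately show "(graph_resolvent G y, y - graph_resolvent G y) \<in> G"
    by (metis add_diff_cancel_left')
qed

lemma graph_resolvent_norm_le: "norm (graph_resolvent G y) \<le> norm y"
  using positive_selfadjoint_graph_diff_norm_le[OF graph_resolvent_in_graph
      positive_selfadjoint_graph_diff[OF graph_resolvent_in_graph graph_resolvent_in_graph, of y y]]
  by simp

lemma bounded_clinear_op_graph_resolvent: "bounded_clinear_op (graph_resolvent G)"
proof (rule bounded_clinear_opI[where K=1])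
  let ?R = "graph_resolvent G"
  show "?R (a + b) = ?R a + ?R b" for a b
    using graph_resolvent_eq[OF positive_selfadjoint_graph_add[OF graph_resolvent_in_graph
          graph_resolvent_in_graph]]
    by (simp add: algebra_simps)
  show "?R (c *\<^sub>C a) = c *\<^sub>C ?R a" for c a
    using graph_resolvent_eq[OF positive_selfadjoint_graph_scaleC[OF graph_resolvent_in_graph]]
    by (simp add: scaleC_add_right[symmetric])
qed (simp add: graph_resolvent_norm_le)

lemma positive_op_graph_resolvent: "positive_op (graph_resolvent G)"
  unfolding positive_op_def
proof
  fix y
  let ?\<xi> = "graph_resolvent G y"
  have "cinner y ?\<xi> = cinner ?\<xi> ?\<xi> + cnj (cinner ?\<xi> (y - ?\<xi>))"
    using cinner_add_left[of ?\<xi> "y - ?\<xi>" ?\<xi>] cinner_commute[of "y - ?\<xi>" ?\<xi>] by simp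
  moreover have "Im (cinner ?\<xi> (y - ?\<xi>)) = 0" "0 \<le> Re (cinner ?\<xi> (y - ?\<xi>))"
    using positive_selfadjoint_graph_cinner[OF graph_resolvent_in_graph] by simp_all
  ultimately show "Im (cinner y ?\<xi>) = 0 \<and> 0 \<le> Re (cinner y ?\<xi>)" by (simp add: cinner_self)
qed

end

lemma hermitian_dense_range_injective:
  assumes hermitian: "\<And>x y. cinner (Y x) y = cinner x (Y (y::'a::cplx_hilbert))"
    and dense: "closure (range Y) = UNIV" and "Y u = 0"
  shows "u = 0"
proof -
  have "range Y \<subseteq> {v. cinner v u = 0}" using \<open>Y u = 0\<close> by (auto simp: hermitian)
  moreover have "closed {v. cinner v u = 0}"
    by (intro closed_Collect_eq continuous_intros bounded_bilinear.continuous_on[OF bounded_bilinear_cinner])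
  ultimately have "cinner u u = 0" using dense closure_minimal by blast
  then show ?thesis by (simp add: cinner_eq_zero_iff)
qed

text \<open>The graph of \<open>Y\<inverse> - I\<close>, i.e. of the operator whose resolvent is \<open>Y\<close>.\<close>
definition resolvent_inverse_graph :: "('a::cplx_vector \<Rightarrow> 'a) \<Rightarrow> ('a \<times> 'a) set" where
  "resolvent_inverse_graph Y = range (\<lambda>\<eta>. (Y \<eta>, \<eta> - Y \<eta>))"

lemma closed_resolvent_inverse_graph:
  assumes Y: "bounded_clinear_op (Y::'a::cplx_hilbert \<Rightarrow> 'a)"
  shows "closed (resolvent_inverse_graph Y)"
  unfolding closed_sequential_limits resolvent_inverse_graph_def
proof (intro allI impI)
  fix s l assume "(\<forall>n. s n \<in> range (\<lambda>\<eta>. (Y \<eta>, \<eta> - Y \<eta>))) \<and> s \<longlonglongrightarrow> l"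
  then have lim: "s \<longlonglongrightarrow> l" and "\<forall>n. \<exists>\<eta>. s n = (Y \<eta>, \<eta> - Y \<eta>)" by blast+
  then obtain \<eta> where s: "\<And>n. s n = (Y (\<eta> n), \<eta> n - Y (\<eta> n))" by metis
  obtain a b where l: "l = (a, b)" by (cases l)
  have "(\<lambda>n. Y (\<eta> n)) \<longlonglongrightarrow> a" and "(\<lambda>n. Y (\<eta> n) + (\<eta> n - Y (\<eta> n))) \<longlonglongrightarrow> a + b"
    using tendsto_fst[OF lim] tendsto_snd[OF lim] tendsto_add[OF tendsto_fst[OF lim] tendsto_snd[OF lim]]
    by (simp_all add: s l)
  then have "(\<lambda>n. Y (\<eta> n)) \<longlonglongrightarrow> Y (a + b)"
    using bounded_clinear_op_tendsto[OF Y] by simp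
  then have "a = Y (a + b)" using \<open>(\<lambda>n. Y (\<eta> n)) \<longlonglongrightarrow> a\<close> LIMSEQ_unique by blast
  then show "l \<in> range (\<lambda>\<eta>. (Y \<eta>, \<eta> - Y \<eta>))"
    by (intro image_eqI[of _ _ "a + b"]) (simp_all add: l)
qed

lemma positive_selfadjoint_resolvent_inverse_graph:
  assumes Y: "bounded_clinear_op (Y::'a::cplx_hilbert \<Rightarrow> 'a)" and P: "positive_op Y"
    and contraction: "\<And>x. norm (Y x) \<le> norm x" and dense: "closure (range Y) = UNIV"
  shows "positive_selfadjoint_graph (resolvent_inverse_graph Y)"
  unfolding positive_selfadjoint_graph_def
proof (intro conjI)
  let ?G = "resolvent_inverse_graph Y"
  note hermitian = positive_op_hermitian[OF Y P]
  note injective = hermitian_dense_range_injective[OF hermitian dense]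
  show "is_graph ?G"
    unfolding is_graph_def resolvent_inverse_graph_def
  proof clarsimp
    fix \<eta> \<eta>' assume "Y \<eta> = Y \<eta>'"
    then have "Y (\<eta> - \<eta>') = 0" by (simp add: bounded_clinear_op_diff[OF Y])
    then show "\<eta> = \<eta>'" using injective[of "\<eta> - \<eta>'"] by simp
  qed
  show "closure (Domain ?G) = UNIV"
    using dense by (simp add: resolvent_inverse_graph_def Domain_fst image_image)
  show "\<forall>(\<xi>, x)\<in>?G. Im (cinner \<xi> x) = 0 \<and> 0 \<le> Re (cinner \<xi> x)"
  proof (clarsimp simp: resolvent_inverse_graph_def)
    fix \<eta>
    have "cinner (Y \<eta>) (\<eta> - Y \<eta>) = cinner \<eta> (Y \<eta>) - complex_of_real ((norm (Y \<eta>))\<^sup>2)"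
      by (simp add: cinner_diff_right hermitian cinner_self)
    then show "Im (cinner (Y \<eta>) (\<eta> - Y \<eta>)) = 0 \<and> 0 \<le> Re (cinner (Y \<eta>) (\<eta> - Y \<eta>))"
      using P positive_contraction_norm_le[OF Y P contraction, of \<eta>] by (simp add: positive_op_def)
  qed
  show "graph_adjoint ?G = ?G"
  proof
    show "graph_adjoint ?G \<subseteq> ?G"
    proof clarify
      fix u w assume adjoint: "(u, w) \<in> graph_adjoint ?G"
      have "cinner \<eta> u = cinner \<eta> (Y (u + w))" for \<eta>
        using graph_adjointD[OF adjoint, of "Y \<eta>" "\<eta> - Y \<eta>"]
        by (simp add: resolvent_inverse_graph_def cinner_diff_left cinner_add_right
            hermitian[symmetric] algebra_simps)
      then have "u = Y (u + w)" by (rule cinner_ext)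
      then have "(u, w) = (Y (u + w), (u + w) - Y (u + w))" by simp
      then show "(u, w) \<in> ?G" unfolding resolvent_inverse_graph_def by (rule image_eqI) simp
    qed
    show "?G \<subseteq> graph_adjoint ?G"
      by (auto simp: resolvent_inverse_graph_def cinner_diff_left cinner_diff_right hermitian
          intro!: graph_adjointI)
  qed
qed

definition resolvent :: "('a::cplx_vector \<Rightarrow> 'a) \<Rightarrow> 'a \<Rightarrow> 'a" where
  "resolvent X = graph_resolvent (range (\<lambda>x. (x, X x)))"

context
  fixes X :: "'a::cplx_hilbert \<Rightarrow> 'a"
  assumes X: "bounded_clinear_op X" and P: "positive_op X"
begin

lemma positive_selfadjoint_graph_of_positive_op:
  "positive_selfadjoint_graph (range (\<lambda>x. (x, X x)))"
  unfolding positive_selfadjoint_graph_def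
proof (intro conjI)
  let ?G = "range (\<lambda>x. (x, X x))"
  note hermitian = positive_op_hermitian[OF X P]
  show "graph_adjoint ?G = ?G"
  proof
    show "graph_adjoint ?G \<subseteq> ?G"
    proof clarify
      fix \<eta> \<zeta> assume adjoint: "(\<eta>, \<zeta>) \<in> graph_adjoint ?G"
      have "cinner x (X \<eta>) = cinner x \<zeta>" for x
        using graph_adjointD[OF adjoint, of x "X x"] by (simp add: hermitian)
      then have "X \<eta> = \<zeta>" by (rule cinner_ext)
      then show "(\<eta>, \<zeta>) \<in> ?G" by auto
    qed
    show "?G \<subseteq> graph_adjoint ?G" by (auto intro!: graph_adjointI simp: hermitian)
  qed
  have "x \<in> Domain ?G" for x by (rule DomainI[of _ "X x"]) simp
  then have "Domain ?G = UNIV" by blast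
  then show "closure (Domain ?G) = UNIV" by simp
qed (use P in \<open>auto simp: is_graph_def positive_op_def\<close>)

lemma resolvent_left_inverse: "resolvent X y + X (resolvent X y) = y"
  using graph_resolvent_in_graph[OF positive_selfadjoint_graph_of_positive_op, of y]
  by (auto simp: resolvent_def algebra_simps)

lemma resolvent_right_inverse: "resolvent X (\<xi> + X \<xi>) = \<xi>"
  using graph_resolvent_eq[OF positive_selfadjoint_graph_of_positive_op] by (simp add: resolvent_def)

lemma bounded_clinear_op_resolvent: "bounded_clinear_op (resolvent X)"
  unfolding resolvent_def
  by (rule bounded_clinear_op_graph_resolvent[OF positive_selfadjoint_graph_of_positive_op])

lemma positive_op_resolvent: "positive_op (resolvent X)"
  unfolding resolvent_def
  by (rule positive_op_graph_resolvent[OF positive_selfadjoint_graph_of_positive_op])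

lemma resolvent_norm_le: "norm (resolvent X y) \<le> norm y"
  unfolding resolvent_def by (rule graph_resolvent_norm_le[OF positive_selfadjoint_graph_of_positive_op])

lemma resolvent_commute:
  assumes U: "bounded_clinear_op U" and commute: "\<And>v. U (X v) = X (U v)"
  shows "U (resolvent X y) = resolvent X (U y)"
proof -
  have "resolvent X (U y) = resolvent X (U (resolvent X y + X (resolvent X y)))"
    by (simp add: resolvent_left_inverse)
  also have "\<dots> = U (resolvent X y)"
    by (simp add: bounded_clinear_op_add[OF U] commute resolvent_right_inverse)
  finally show ?thesis by simp
qed

end

lemma resolvent_diff_norm_le:
  fixes X Z :: "'a::cplx_hilbert \<Rightarrow> 'a"
  assumes X: "bounded_clinear_op X" "positive_op X" and Z: "bounded_clinear_op Z" "positive_op Z"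
    and commute: "\<And>v. X (Z v) = Z (X v)"
  shows "norm (resolvent X \<eta> - resolvent Z \<eta>) \<le> norm (Z \<eta> - X \<eta>)"
proof -
  let ?RX = "resolvent X" and ?RZ = "resolvent Z"
  note RX = bounded_clinear_op_resolvent[OF X] and RZ = bounded_clinear_op_resolvent[OF Z]
  have RZ_X: "X (?RZ v) = ?RZ (X v)" for v by (rule resolvent_commute[OF Z X(1) commute])
  have RX_Z: "Z (?RX v) = ?RX (Z v)" for v by (rule resolvent_commute[OF X Z(1) commute[symmetric]])
  have RX_RZ: "?RX (?RZ v) = ?RZ (?RX v)" for v by (rule resolvent_commute[OF Z RX RX_Z[symmetric]])
  have "?RX \<eta> = ?RX (?RZ \<eta>) + ?RX (?RZ (Z \<eta>))"
    using arg_cong[OF resolvent_left_inverse[OF Z, of \<eta>], of ?RX]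
    by (simp add: bounded_clinear_op_add[OF RX] resolvent_commute[OF Z Z(1)])
  moreover have "?RZ \<eta> = ?RX (?RZ \<eta>) + ?RX (?RZ (X \<eta>))"
    using arg_cong[OF resolvent_left_inverse[OF X, of \<eta>], of ?RZ]
    by (simp add: bounded_clinear_op_add[OF RZ] resolvent_commute[OF X X(1)] RX_RZ)
  ultimately have "?RX \<eta> - ?RZ \<eta>
      = (?RX (?RZ \<eta>) + ?RX (?RZ (Z \<eta>))) - (?RX (?RZ \<eta>) + ?RX (?RZ (X \<eta>)))"
    by (rule arg_cong2[where f=minus])
  also have "\<dots> = ?RX (?RZ (Z \<eta> - X \<eta>))"
    by (simp add: bounded_clinear_op_diff[OF RX] bounded_clinear_op_diff[OF RZ])
  finally have "?RX \<eta> - ?RZ \<eta> = ?RX (?RZ (Z \<eta> - X \<eta>))" .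
  then show ?thesis
    using resolvent_norm_le[OF X, of "?RZ (Z \<eta> - X \<eta>)"] resolvent_norm_le[OF Z, of "Z \<eta> - X \<eta>"]
    by simp
qed

lemma contraction_net_convergent:
  fixes R :: "'i \<Rightarrow> 'a::cplx_hilbert \<Rightarrow> 'a"
  assumes F: "F \<noteq> bot" and dense: "closure D = UNIV"
    and contractions: "eventually (\<lambda>i. bounded_clinear_op (R i) \<and> (\<forall>y. norm (R i y) \<le> norm y)) F"
    and Cauchy_on_D: "\<And>\<eta> e. \<eta> \<in> D \<Longrightarrow> e > 0
      \<Longrightarrow> \<exists>P. eventually P F \<and> (\<forall>i j. P i \<and> P j \<longrightarrow> dist (R i \<eta>) (R j \<eta>) < e)"
  shows "\<exists>c. ((\<lambda>i. R i y) \<longlongrightarrow> c) F"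
proof -
  have "\<exists>P. eventually P F \<and> (\<forall>i j. P i \<and> P j \<longrightarrow> dist (R i y) (R j y) < e)" if e: "e > 0" for e
  proof -
    have "y \<in> closure D" using dense by simp
    then obtain \<eta> where \<eta>_D: "\<eta> \<in> D" and "dist \<eta> y < e / 3"
      using e unfolding closure_approachable by (meson divide_pos_pos zero_less_numeral)
    then have \<eta>: "norm (y - \<eta>) < e / 3" by (simp add: dist_norm norm_minus_commute)
    obtain P where P: "eventually P F" "\<And>i j. P i \<Longrightarrow> P j \<Longrightarrow> dist (R i \<eta>) (R j \<eta>) < e / 3"
      using Cauchy_on_D[OF \<eta>_D, of "e / 3"] e by auto
    let ?Q = "\<lambda>i. P i \<and> bounded_clinear_op (R i) \<and> (\<forall>y. norm (R i y) \<le> norm y)"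
    have "dist (R i y) (R j y) < e" if "?Q i" "?Q j" for i j
    proof -
      have "R i y - R j y = R i (y - \<eta>) + (R i \<eta> - R j \<eta>) - R j (y - \<eta>)"
        using that by (simp add: bounded_clinear_op_diff)
      then have "norm (R i y - R j y) \<le> norm (R i (y - \<eta>) + (R i \<eta> - R j \<eta>)) + norm (R j (y - \<eta>))"
        by (simp only: norm_triangle_ineq4)
      also have "\<dots> \<le> norm (R i (y - \<eta>)) + dist (R i \<eta>) (R j \<eta>) + norm (R j (y - \<eta>))"
        using norm_triangle_ineq by (simp add: dist_norm)
      finally have "dist (R i y) (R j y)
          \<le> norm (R i (y - \<eta>)) + dist (R i \<eta>) (R j \<eta>) + norm (R j (y - \<eta>))"
        by (simp add: dist_norm)
      moreover have "norm (R i (y - \<eta>)) \<le> norm (y - \<eta>)" "norm (R j (y - \<eta>)) \<le> norm (y - \<eta>)"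
        using that by blast+
      moreover have "dist (R i \<eta>) (R j \<eta>) < e / 3" using P(2) that by blast
      ultimately show ?thesis using \<eta> by linarith
    qed
    then show ?thesis using eventually_conj[OF P(1) contractions] by blast
  qed
  then have "cauchy_filter (filtermap (\<lambda>i. R i y) F)"
    unfolding cauchy_filter_metric_filtermap by blast
  then have "\<exists>c. filtermap (\<lambda>i. R i y) F \<le> nhds c"
    by (rule cauchy_filter_complete_converges[OF _ complete_UNIV]) (simp_all add: filtermap_bot_iff F)
  then show ?thesis by (simp add: filterlim_def)
qed

lemma tendsto_contraction_net:
  fixes R :: "'i \<Rightarrow> 'a::cplx_hilbert \<Rightarrow> 'a"
  assumes F: "F \<noteq> bot"
    and contractions: "eventually (\<lambda>i. bounded_clinear_op (R i) \<and> positive_op (R i)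
        \<and> (\<forall>y. norm (R i y) \<le> norm y)) F"
    and lim: "\<And>y. ((\<lambda>i. R i y) \<longlongrightarrow> Y y) F"
  shows "bounded_clinear_op Y" and "positive_op Y" and "norm (Y y) \<le> norm y"
proof -
  have limit_unique: "Y y = c" if "((\<lambda>i. R i y) \<longlongrightarrow> c) F" for y c
    by (rule tendsto_unique[OF F lim that])
  show norm_le: "norm (Y y) \<le> norm y" for y
    by (rule tendsto_le[OF F tendsto_const tendsto_norm[OF lim]])
      (use contractions in \<open>auto elim: eventually_mono\<close>)
  show "bounded_clinear_op Y"
  proof (rule bounded_clinear_opI[where K=1])
    show "Y (a + b) = Y a + Y b" for a b
      by (rule limit_unique, rule Lim_transform_eventually[OF tendsto_add[OF lim lim]])
        (use contractions in \<open>auto elim: eventually_mono simp: bounded_clinear_op_add\<close>)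
    show "Y (c *\<^sub>C a) = c *\<^sub>C Y a" for c a
    proof -
      have "((\<lambda>i. c *\<^sub>C R i a) \<longlongrightarrow> c *\<^sub>C Y a) F"
        using bounded_clinear_op_tendsto[OF bounded_clinear_op_scale[OF bounded_clinear_op_id] lim]
        by simp
      then show ?thesis
        by (rule limit_unique[OF Lim_transform_eventually])
          (use contractions in \<open>auto elim: eventually_mono simp: bounded_clinear_op_scaleC\<close>)
    qed
  qed (simp add: norm_le)
  show "positive_op Y"
    unfolding positive_op_def
  proof
    fix y
    have lim_cinner: "((\<lambda>i. cinner y (R i y)) \<longlongrightarrow> cinner y (Y y)) F"
      by (rule tendsto_cinner[OF tendsto_const lim])
    have "((\<lambda>i. Im (cinner y (R i y))) \<longlongrightarrow> 0) F"
      by (rule Lim_transform_eventually[OF tendsto_const])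
        (use contractions in \<open>auto elim: eventually_mono simp: positive_op_def\<close>)
    then have "Im (cinner y (Y y)) = 0" by (rule tendsto_unique[OF F tendsto_Im[OF lim_cinner]])
    moreover have "0 \<le> Re (cinner y (Y y))"
      by (rule tendsto_le[OF F tendsto_Re[OF lim_cinner] tendsto_const])
        (use contractions in \<open>auto elim: eventually_mono simp: positive_op_def\<close>)
    ultimately show "Im (cinner y (Y y)) = 0 \<and> 0 \<le> Re (cinner y (Y y))" by simp
  qed
qed

lemma hermitian_net_limit_symmetric:
  fixes X :: "'i \<Rightarrow> 'a::cplx_inner \<Rightarrow> 'a"
  assumes F: "F \<noteq> bot" and hermitian: "eventually (\<lambda>i. \<forall>x y. cinner (X i x) y = cinner x (X i y)) F"
    and \<xi>: "((\<lambda>i. X i \<xi>) \<longlongrightarrow> a) F" and \<eta>: "((\<lambda>i. X i \<eta>) \<longlongrightarrow> b) F"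
  shows "cinner b \<xi> = cinner \<eta> a"
proof -
  have "((\<lambda>i. cinner (X i \<eta>) \<xi>) \<longlongrightarrow> cinner \<eta> a) F"
    using hermitian
    by (rule Lim_transform_eventually[OF tendsto_cinner[OF tendsto_const \<xi>], OF eventually_mono]) simp
  then show ?thesis by (rule tendsto_unique[OF F tendsto_cinner[OF \<eta> tendsto_const]])
qed

definition inverts_on :: "'a::cplx_vector set \<Rightarrow> ('a \<Rightarrow> 'a) \<Rightarrow> ('a \<Rightarrow> 'a) \<Rightarrow> bool" where
  "inverts_on D A Y \<longleftrightarrow> (\<forall>\<xi>\<in>D. Y \<xi> + A (Y \<xi>) = \<xi>) \<and> (\<forall>\<xi>\<in>D. Y (\<xi> + A \<xi>) = \<xi>)"

lemma op_closure_graph_eq_resolvent_inverse_graph: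
  assumes D: "dense_subspace D" and Y: "bounded_clinear_op (Y::'a::cplx_hilbert \<Rightarrow> 'a)"
    and Y_D: "\<And>\<xi>. \<xi> \<in> D \<Longrightarrow> Y \<xi> \<in> D" and inverse: "inverts_on D A Y"
  shows "op_closure_graph D A = resolvent_inverse_graph Y"
proof
  have "closed (resolvent_inverse_graph Y)" by (rule closed_resolvent_inverse_graph[OF Y])
  moreover have "{(\<xi>, A \<xi>) | \<xi>. \<xi> \<in> D} \<subseteq> resolvent_inverse_graph Y"
  proof clarify
    fix \<xi> assume "\<xi> \<in> D"
    then have "(\<xi>, A \<xi>) = (Y (\<xi> + A \<xi>), (\<xi> + A \<xi>) - Y (\<xi> + A \<xi>))"
      using inverse by (simp add: inverts_on_def)
    then show "(\<xi>, A \<xi>) \<in> resolvent_inverse_graph Y"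
      unfolding resolvent_inverse_graph_def by (rule image_eqI) simp
  qed
  ultimately show "op_closure_graph D A \<subseteq> resolvent_inverse_graph Y"
    unfolding op_closure_graph_def by (rule closure_minimal[rotated])
  show "resolvent_inverse_graph Y \<subseteq> op_closure_graph D A"
  proof (clarsimp simp: resolvent_inverse_graph_def)
    fix \<eta>
    obtain s where s: "\<And>n. s n \<in> D" "s \<longlonglongrightarrow> \<eta>"
      using D closure_sequential[of \<eta> D] by (auto simp: dense_subspace_def)
    have "(Y (s n), s n - Y (s n)) \<in> {(\<xi>, A \<xi>) | \<xi>. \<xi> \<in> D}" for n
    proof -
      have "A (Y (s n)) = s n - Y (s n)"
        using inverse s(1) by (simp add: inverts_on_def eq_diff_eq add.commute)
      then show ?thesis using Y_D[OF s(1)] by (intro CollectI exI[of _ "Y (s n)"]) simp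
    qed
    moreover have "(\<lambda>n. (Y (s n), s n - Y (s n))) \<longlonglongrightarrow> (Y \<eta>, \<eta> - Y \<eta>)"
      by (intro tendsto_Pair tendsto_diff bounded_clinear_op_tendsto[OF Y] s(2))
    ultimately show "(Y \<eta>, \<eta> - Y \<eta>) \<in> op_closure_graph D A"
      unfolding op_closure_graph_def by (rule closure_sequential[THEN iffD2, OF exI, OF conjI[OF allI]])
  qed
qed

lemma graph_resolvent_commute:
  assumes psa: "positive_selfadjoint_graph G" and U: "bounded_clinear_op (U::'a::cplx_hilbert \<Rightarrow> 'a)"
    and invariant: "\<And>\<xi> x. (\<xi>, x) \<in> G \<Longrightarrow> (U \<xi>, U x) \<in> G"
  shows "U (graph_resolvent G y) = graph_resolvent G (U y)"
  using graph_resolvent_eq[OF psa invariant[OF graph_resolvent_in_graph[OF psa]]]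
  by (simp add: bounded_clinear_op_diff[OF U])

lemma inverts_on_dense_range:
  assumes "dense_subspace D" and "inverts_on D A Y"
  shows "closure (range Y) = UNIV"
proof -
  have "\<xi> \<in> range Y" if "\<xi> \<in> D" for \<xi>
    using assms(2) that by (metis inverts_on_def rangeI)
  then have "closure D \<subseteq> closure (range Y)" by (intro closure_mono) blast
  then show ?thesis using assms(1) unfolding dense_subspace_def by blast
qed

locale tau_closure_element =
  fixes D :: "'h::cplx_hilbert set" and M0 :: "('h \<Rightarrow> 'h) set" and A :: "'h \<Rightarrow> 'h"
  assumes D: "dense_subspace D"
    and M0: "unital_cstar_algebra M0"
    and A: "A \<in> tau_closure D (bicommutant M0)"
    and M_D: "\<forall>X\<in>bicommutant M0. \<forall>\<xi>\<in>D. X \<xi> \<in> D"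
begin

abbreviation "M \<equiv> bicommutant M0"
abbreviation "C \<equiv> commutant M0"

lemma M0_bounded: "\<forall>U\<in>M0. bounded_clinear_op U"
  using M0 unfolding unital_cstar_algebra_def by (elim conjE)

lemma M0_adj: "\<forall>U\<in>M0. adj UNIV U \<in> M0"
  using M0 unfolding unital_cstar_algebra_def by (elim conjE)

lemma C_adj: "S \<in> C \<Longrightarrow> adj UNIV S \<in> C"
  by (rule commutant_adj[OF M0_bounded M0_adj])

lemma M_bounded: "X \<in> M \<Longrightarrow> bounded_clinear_op X"
  unfolding bicommutant_def by (rule commutant_bounded)

lemma M_commute: "X \<in> M \<Longrightarrow> S \<in> C \<Longrightarrow> X (S x) = S (X x)"
  unfolding bicommutant_def by (rule commutant_commute)

lemma M_adj: "X \<in> M \<Longrightarrow> adj UNIV X \<in> M"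
  unfolding bicommutant_def
  by (rule commutant_adj) (simp_all add: commutant_bounded C_adj)

lemma M_I: "bounded_clinear_op X \<Longrightarrow> (\<And>S x. S \<in> C \<Longrightarrow> X (S x) = S (X x)) \<Longrightarrow> X \<in> M"
  unfolding bicommutant_def by (rule commutantI)

lemma M_id: "id \<in> M"
  unfolding bicommutant_def by (rule commutant_id)

lemma M_plus: "X \<in> M \<Longrightarrow> Z \<in> M \<Longrightarrow> (\<lambda>x. X x + Z x) \<in> M"
  unfolding bicommutant_def by (rule commutant_plus) (auto intro: commutant_bounded)

lemma M_scale: "X \<in> M \<Longrightarrow> (\<lambda>x. c *\<^sub>C X x) \<in> M"
  unfolding bicommutant_def by (rule commutant_scale) (auto intro: commutant_bounded)

lemma M_comp: "X \<in> M \<Longrightarrow> Z \<in> M \<Longrightarrow> X \<circ> Z \<in> M"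
  unfolding bicommutant_def by (rule commutant_comp)

lemma A_Ldag: "A \<in> Ldag D"
  using A by (simp add: tau_closure_def tau_s_star_limit_of_def)

lemma A_adj: "\<xi> \<in> D \<Longrightarrow> \<eta> \<in> D \<Longrightarrow> cinner (A \<xi>) \<eta> = cinner \<xi> (adj D A \<eta>)"
  using A_Ldag adj_cinner[OF D] by (auto simp: Ldag_def)

lemma positive_selfadjoint_closure_if_inverts:
  assumes Y: "Y \<in> unit_ball_pos M" and inverse: "inverts_on D A Y"
  shows "positive_selfadjoint_graph (op_closure_graph D A)"
proof -
  have YB: "bounded_clinear_op Y" and YP: "positive_op Y" and "onorm Y \<le> 1" and "Y \<in> M"
    using Y M_bounded by (auto simp: unit_ball_pos_def)
  then have contraction: "norm (Y x) \<le> norm x" for x by (simp add: onorm_le_1_imp_norm_le)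
  have "closure (range Y) = UNIV" by (rule inverts_on_dense_range[OF D inverse])
  then show ?thesis
    using op_closure_graph_eq_resolvent_inverse_graph[OF D YB _ inverse] M_D \<open>Y \<in> M\<close>
      positive_selfadjoint_resolvent_inverse_graph[OF YB YP contraction]
    by simp
qed

text \<open>\<open>A\<close> is affiliated with \<open>M\<close>: pass to the limit in \<open>\<langle>X \<xi>, S \<zeta>\<rangle> = \<langle>S\<^sup>* \<xi>, X\<^sup>\<dagger> \<zeta>\<rangle>\<close>
  along a net in \<open>M\<close> converging to \<open>A\<close> in \<open>\<tau>\<^sub>s\<^sub>*\<close>.\<close>
lemma cinner_A_commutant:
  assumes S: "S \<in> C" and \<xi>: "\<xi> \<in> D" and \<zeta>: "\<zeta> \<in> D"
  shows "cinner (A \<xi>) (S \<zeta>) = cinner (adj UNIV S \<xi>) (adj D A \<zeta>)"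
proof -
  obtain F :: "('h \<Rightarrow> 'h) filter" where F: "F \<noteq> bot" and in_M: "eventually (\<lambda>X. X \<in> M) F"
    and lim: "((\<lambda>X. X \<xi>) \<longlongrightarrow> A \<xi>) F" and lim_adj: "((\<lambda>X. adj D X \<zeta>) \<longlongrightarrow> adj D A \<zeta>) F"
    using A \<xi> \<zeta> by (auto simp: tau_closure_def tau_s_star_limit_of_def)
  have SB: "bounded_clinear_op S" using S by (rule commutant_bounded)
  have approx: "cinner (X \<xi>) (S \<zeta>) = cinner (adj UNIV S \<xi>) (adj D X \<zeta>)" if X: "X \<in> M" for X
  proof -
    have XB: "bounded_clinear_op X" by (rule M_bounded[OF X])
    have "cinner (X \<xi>) (S \<zeta>) = cinner \<xi> (S (adj UNIV X \<zeta>))"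
      by (simp add: adj_UNIV[OF XB] M_commute[OF M_adj[OF X] S])
    also have "\<dots> = cinner (adj UNIV S \<xi>) (adj D X \<zeta>)"
      by (simp add: adj_UNIV_left[OF SB] adj_eq_adj_UNIV[OF D XB])
    finally show ?thesis .
  qed
  have "eventually (\<lambda>X. cinner (adj UNIV S \<xi>) (adj D X \<zeta>) = cinner (X \<xi>) (S \<zeta>)) F"
    using in_M by (rule eventually_mono) (simp add: approx)
  then have "((\<lambda>X. cinner (X \<xi>) (S \<zeta>)) \<longlongrightarrow> cinner (adj UNIV S \<xi>) (adj D A \<zeta>)) F"
    by (rule Lim_transform_eventually[OF tendsto_cinner[OF tendsto_const lim_adj]])
  then show ?thesis by (rule tendsto_unique[OF F tendsto_cinner[OF lim tendsto_const]])
qed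

context
  assumes psa: "positive_selfadjoint_graph (op_closure_graph D A)"
begin

lemma graph_adjoint_graph_A:
  "graph_adjoint {(\<xi>, A \<xi>) | \<xi>. \<xi> \<in> D} = op_closure_graph D A"
proof -
  have "graph_adjoint (op_closure_graph D A) = op_closure_graph D A"
    using psa by (simp add: positive_selfadjoint_graph_def)
  then show ?thesis by (simp add: op_closure_graph_def graph_adjoint_closure)
qed

lemma closure_graph_functional: "(\<xi>, x) \<in> op_closure_graph D A \<Longrightarrow> (\<xi>, x') \<in> op_closure_graph D A \<Longrightarrow> x = x'"
  using psa by (auto simp: positive_selfadjoint_graph_def is_graph_def)

lemma graph_A_subset: "\<xi> \<in> D \<Longrightarrow> (\<xi>, A \<xi>) \<in> op_closure_graph D A"
  unfolding op_closure_graph_def by (rule closure_subset[THEN subsetD]) blast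

lemma adj_A_eq_A: "\<zeta> \<in> D \<Longrightarrow> adj D A \<zeta> = A \<zeta>"
proof -
  assume \<zeta>: "\<zeta> \<in> D"
  have "(\<zeta>, adj D A \<zeta>) \<in> graph_adjoint {(\<xi>, A \<xi>) | \<xi>. \<xi> \<in> D}"
    by (rule graph_adjointI) (auto simp: A_adj \<zeta>)
  then show ?thesis
    using closure_graph_functional graph_A_subset[OF \<zeta>] by (simp add: graph_adjoint_graph_A)
qed

lemma commutant_preserves_closure_graph:
  assumes S: "S \<in> C" and p: "(\<xi>, x) \<in> op_closure_graph D A"
  shows "(S \<xi>, S x) \<in> op_closure_graph D A"
proof -
  have SB: "bounded_clinear_op S" using S by (rule commutant_bounded)
  have "(S \<zeta>, S (A \<zeta>)) \<in> op_closure_graph D A" if \<zeta>: "\<zeta> \<in> D" for \<zeta>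
    unfolding graph_adjoint_graph_A[symmetric]
  proof (rule graph_adjointI, clarify)
    fix \<xi>' assume "\<xi>' \<in> D"
    then show "cinner (A \<xi>') (S \<zeta>) = cinner \<xi>' (S (A \<zeta>))"
      by (simp add: cinner_A_commutant[OF S _ \<zeta>] adj_A_eq_A[OF \<zeta>] adj_UNIV_left[OF SB])
  qed
  then have "{(\<zeta>, A \<zeta>) | \<zeta>. \<zeta> \<in> D} \<subseteq> (\<lambda>p. (S (fst p), S (snd p))) -` op_closure_graph D A"
    by auto
  moreover have "closed ((\<lambda>p. (S (fst p), S (snd p))) -` op_closure_graph D A)"
    by (intro continuous_closed_vimage positive_selfadjoint_graph_closed[OF psa] continuous_intros
        linear_continuous_at bounded_linear_compose[OF bounded_clinear_op_bounded_linear[OF SB]]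
        bounded_linear_fst bounded_linear_snd)
  ultimately have "op_closure_graph D A \<subseteq> (\<lambda>p. (S (fst p), S (snd p))) -` op_closure_graph D A"
    unfolding op_closure_graph_def by (rule closure_minimal)
  then show ?thesis using p by (fastforce simp: subset_eq)
qed

lemma inverts_if_positive_selfadjoint_closure:
  "\<exists>Y\<in>unit_ball_pos M. inverts_on D A Y"
proof
  let ?G = "op_closure_graph D A"
  let ?Y = "graph_resolvent ?G"
  have YB: "bounded_clinear_op ?Y" by (rule bounded_clinear_op_graph_resolvent[OF psa])
  have "?Y (S x) = S (?Y x)" if "S \<in> C" for S x
    using graph_resolvent_commute[OF psa commutant_bounded[OF that]
        commutant_preserves_closure_graph[OF that]] by simp
  then have "?Y \<in> M" by (rule M_I[OF YB])
  moreover have "onorm ?Y \<le> 1"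
    by (rule onorm_bound) (simp_all add: graph_resolvent_norm_le[OF psa])
  ultimately show "?Y \<in> unit_ball_pos M"
    by (simp add: unit_ball_pos_def positive_op_graph_resolvent[OF psa])
  have "?Y \<xi> + A (?Y \<xi>) = \<xi>" if "\<xi> \<in> D" for \<xi>
  proof -
    have "?Y \<xi> \<in> D" using M_D \<open>?Y \<in> M\<close> that by blast
    then have "A (?Y \<xi>) = \<xi> - ?Y \<xi>"
      using closure_graph_functional[OF graph_A_subset graph_resolvent_in_graph[OF psa]] by blast
    then show ?thesis by simp
  qed
  then show "inverts_on D A ?Y"
    using graph_resolvent_eq[OF psa graph_A_subset] by (simp add: inverts_on_def)
qed

end

context
  fixes S :: "('h \<Rightarrow> 'h) set" and F :: "('h \<Rightarrow> 'h) filter"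
  assumes S_M: "S \<subseteq> M" and S_positive: "\<forall>X\<in>S. positive_op X"
    and S_commute: "\<forall>X\<in>S. \<forall>Z\<in>S. X \<circ> Z = Z \<circ> X"
    and F: "F \<noteq> bot" and in_S: "eventually (\<lambda>X. X \<in> S) F"
    and lim: "\<And>\<xi>. \<xi> \<in> D \<Longrightarrow> ((\<lambda>X. X \<xi>) \<longlongrightarrow> A \<xi>) F"
begin

lemma S_bounded_positive:
  assumes "X \<in> S" shows "bounded_clinear_op X" and "positive_op X"
  using assms S_M S_positive M_bounded by blast+

lemma eventually_resolvent_contraction:
  "eventually (\<lambda>X. bounded_clinear_op (resolvent X) \<and> positive_op (resolvent X)
      \<and> (\<forall>y. norm (resolvent X y) \<le> norm y)) F"
  using in_S by (rule eventually_mono)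
    (simp add: S_bounded_positive bounded_clinear_op_resolvent positive_op_resolvent resolvent_norm_le)

lemma tendsto_resolvent_net: "((\<lambda>X. resolvent X y) \<longlongrightarrow> Lim F (\<lambda>X. resolvent X y)) F"
proof -
  have Cauchy: "\<exists>P. eventually P F \<and> (\<forall>X Z. P X \<and> P Z \<longrightarrow> dist (resolvent X \<eta>) (resolvent Z \<eta>) < e)"
    if \<eta>: "\<eta> \<in> D" and e: "e > 0" for \<eta> e
  proof (intro exI conjI allI impI)
    let ?P = "\<lambda>X. X \<in> S \<and> dist (X \<eta>) (A \<eta>) < e / 2"
    show "eventually ?P F"
      using in_S tendstoD[OF lim[OF \<eta>], of "e / 2"] e by (simp add: eventually_conj)
    fix X Z assume "?P X \<and> ?P Z"
    then have X: "X \<in> S" "dist (X \<eta>) (A \<eta>) < e / 2" and Z: "Z \<in> S" "dist (Z \<eta>) (A \<eta>) < e / 2"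
      by auto
    have "X (Z v) = Z (X v)" for v using S_commute X(1) Z(1) by (metis comp_apply)
    then have "dist (resolvent X \<eta>) (resolvent Z \<eta>) \<le> dist (Z \<eta>) (X \<eta>)"
      unfolding dist_norm
      by (intro resolvent_diff_norm_le S_bounded_positive[OF X(1)] S_bounded_positive[OF Z(1)])
    also have "\<dots> \<le> dist (Z \<eta>) (A \<eta>) + dist (X \<eta>) (A \<eta>)" by (rule dist_triangle2)
    finally show "dist (resolvent X \<eta>) (resolvent Z \<eta>) < e" using X(2) Z(2) by simp
  qed
  have contractions: "eventually (\<lambda>X. bounded_clinear_op (resolvent X)
      \<and> (\<forall>y. norm (resolvent X y) \<le> norm y)) F"
    using eventually_resolvent_contraction by (rule eventually_mono) simp
  have "closure D = UNIV" using D by (simp add: dense_subspace_def)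
  from contraction_net_convergent[OF F this contractions Cauchy]
  obtain c where c: "((\<lambda>X. resolvent X y) \<longlongrightarrow> c) F" ..
  then show ?thesis using tendsto_Lim[OF F c] by simp
qed

lemma resolvent_net_limit_in_unit_ball: "(\<lambda>y. Lim F (\<lambda>X. resolvent X y)) \<in> unit_ball_pos M"
proof -
  let ?Y = "\<lambda>y. Lim F (\<lambda>X. resolvent X y)"
  note limit = tendsto_contraction_net[OF F eventually_resolvent_contraction tendsto_resolvent_net]
  have "?Y (U x) = U (?Y x)" if U: "U \<in> C" for U x
  proof -
    have UB: "bounded_clinear_op U" using U by (rule commutant_bounded)
    have "eventually (\<lambda>X. U (resolvent X x) = resolvent X (U x)) F"
      using in_S
    proof (rule eventually_mono)
      fix X assume X: "X \<in> S"
      then have "U (X v) = X (U v)" for v using S_M M_commute[OF _ U] by auto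
      then show "U (resolvent X x) = resolvent X (U x)"
        by (rule resolvent_commute[OF S_bounded_positive[OF X] UB])
    qed
    then have "((\<lambda>X. resolvent X (U x)) \<longlongrightarrow> U (?Y x)) F"
      by (rule Lim_transform_eventually[OF bounded_clinear_op_tendsto[OF UB tendsto_resolvent_net]])
    then show ?thesis using tendsto_Lim[OF F] by blast
  qed
  then have "?Y \<in> M" by (intro M_I limit(1))
  moreover have "onorm ?Y \<le> 1" by (rule onorm_bound) (simp_all add: limit(3))
  ultimately show ?thesis by (simp add: unit_ball_pos_def limit(2))
qed

lemma resolvent_net_limit_right_inverse:
  assumes \<xi>: "\<xi> \<in> D"
  shows "Lim F (\<lambda>X. resolvent X (\<xi> + A \<xi>)) = \<xi>"
proof -
  have "eventually (\<lambda>X. norm (resolvent X (\<xi> + A \<xi>) - \<xi>) \<le> norm (X \<xi> - A \<xi>)) F"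
    using in_S
  proof (rule eventually_mono)
    fix X assume "X \<in> S"
    note X = S_bounded_positive[OF this]
    have "resolvent X (\<xi> + A \<xi>) - \<xi> = resolvent X (A \<xi> - X \<xi>)"
      using bounded_clinear_op_add[OF bounded_clinear_op_resolvent, OF X, of "\<xi> + X \<xi>" "A \<xi> - X \<xi>"]
      by (simp add: resolvent_right_inverse X)
    then show "norm (resolvent X (\<xi> + A \<xi>) - \<xi>) \<le> norm (X \<xi> - A \<xi>)"
      using resolvent_norm_le[OF X, of "A \<xi> - X \<xi>"] by (simp add: norm_minus_commute)
  qed
  moreover have "((\<lambda>X. norm (X \<xi> - A \<xi>)) \<longlongrightarrow> 0) F"
    using tendsto_norm[OF tendsto_diff[OF lim[OF \<xi>] tendsto_const[of "A \<xi>"]]] by simp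
  ultimately have "((\<lambda>X. resolvent X (\<xi> + A \<xi>) - \<xi>) \<longlongrightarrow> 0) F"
    by (rule Lim_null_comparison)
  then have "((\<lambda>X. (resolvent X (\<xi> + A \<xi>) - \<xi>) + \<xi>) \<longlongrightarrow> 0 + \<xi>) F"
    by (intro tendsto_add tendsto_const)
  then have "((\<lambda>X. resolvent X (\<xi> + A \<xi>)) \<longlongrightarrow> \<xi>) F" by simp
  then show ?thesis using tendsto_Lim[OF F] by blast
qed

text \<open>Both \<open>\<langle>\<eta>, A w\<rangle>\<close> and \<open>\<langle>\<eta>, \<xi> - w\<rangle>\<close> equal \<open>\<langle>A \<eta>, w\<rangle>\<close>: the first because every \<open>X\<close> is
  hermitian, the second because \<open>\<xi> - (I + X)\<inverse> \<xi> = X (I + X)\<inverse> \<xi>\<close>.\<close>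
lemma resolvent_net_limit_left_inverse:
  assumes \<xi>: "\<xi> \<in> D"
  shows "Lim F (\<lambda>X. resolvent X \<xi>) + A (Lim F (\<lambda>X. resolvent X \<xi>)) = \<xi>"
proof -
  define w where "w = Lim F (\<lambda>X. resolvent X \<xi>)"
  have "w \<in> D" using M_D resolvent_net_limit_in_unit_ball \<xi> by (auto simp: unit_ball_pos_def w_def)
  have "A w = \<xi> - w"
  proof (rule dense_subspace_cinner_ext[OF D])
    fix \<eta> assume \<eta>: "\<eta> \<in> D"
    have "eventually (\<lambda>X. \<forall>x y. cinner (X x) y = cinner x (X y)) F"
      using in_S by (rule eventually_mono) (simp add: S_bounded_positive positive_op_hermitian)
    then have "cinner (A \<eta>) w = cinner \<eta> (A w)"
      by (rule hermitian_net_limit_symmetric[OF F _ lim[OF \<open>w \<in> D\<close>] lim[OF \<eta>]])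
    moreover have "eventually (\<lambda>X. cinner \<eta> (\<xi> - resolvent X \<xi>) = cinner (X \<eta>) (resolvent X \<xi>)) F"
      using in_S
    proof (rule eventually_mono)
      fix X assume "X \<in> S"
      note X = S_bounded_positive[OF this]
      have "\<xi> - resolvent X \<xi> = X (resolvent X \<xi>)"
        using resolvent_left_inverse[OF X] by (simp add: algebra_simps)
      then show "cinner \<eta> (\<xi> - resolvent X \<xi>) = cinner (X \<eta>) (resolvent X \<xi>)"
        by (simp add: positive_op_hermitian[OF X])
    qed
    then have "((\<lambda>X. cinner (X \<eta>) (resolvent X \<xi>)) \<longlongrightarrow> cinner \<eta> (\<xi> - w)) F"
      unfolding w_def
      by (rule Lim_transform_eventually[OF tendsto_cinner[OF tendsto_const
            tendsto_diff[OF tendsto_const tendsto_resolvent_net]]])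
    then have "cinner \<eta> (\<xi> - w) = cinner (A \<eta>) w"
      using tendsto_unique[OF F _ tendsto_cinner[OF lim[OF \<eta>] tendsto_resolvent_net]]
      unfolding w_def by blast
    ultimately show "cinner \<eta> (A w) = cinner \<eta> (\<xi> - w)" by simp
  qed
  then show ?thesis by (simp add: w_def)
qed

lemma resolvent_net_limit_inverts: "inverts_on D A (\<lambda>y. Lim F (\<lambda>X. resolvent X y))"
  by (simp add: inverts_on_def resolvent_net_limit_left_inverse resolvent_net_limit_right_inverse)

end

lemma M_sum: "finite I \<Longrightarrow> (\<And>i. i \<in> I \<Longrightarrow> f i \<in> M) \<Longrightarrow> (\<lambda>x. \<Sum>i\<in>I. f i x) \<in> M"
proof (induction I rule: finite_induct)
  case empty
  then show ?case using M_scale[OF M_id, of 0] by simp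
next
  case (insert i I)
  then show ?case using M_plus[of "f i" "\<lambda>x. \<Sum>i\<in>I. f i x"] by simp
qed

lemma M_funpow: "T \<in> M \<Longrightarrow> T ^^ k \<in> M"
  by (induction k) (simp_all add: M_id M_comp)

lemma cq_pos_if_inverts:
  assumes Y: "Y \<in> unit_ball_pos M" and inverse: "inverts_on D A Y"
  shows "A \<in> tau_closure_cq_pos D M"
proof -
  have "Y \<in> M" and YP: "positive_op Y" and "onorm Y \<le> 1" using Y by (auto simp: unit_ball_pos_def)
  then have YB: "bounded_clinear_op Y" and Y_contraction: "\<And>x. norm (Y x) \<le> norm x"
    by (simp_all add: M_bounded onorm_le_1_imp_norm_le)
  define T where "T x = x - Y x" for x
  have "T \<in> M"
    using M_plus[OF M_id M_scale[OF \<open>Y \<in> M\<close>, of "-1"]] by (simp add: T_def[abs_def] scaleC_minus_one)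
  then have TB: "bounded_clinear_op T" by (rule M_bounded)
  have TP: "positive_op T" and T_contraction: "norm (T x) \<le> norm x" for x
    unfolding T_def by (rule positive_contraction_complement[OF YB YP Y_contraction])+
  have "z = 0" if "T z = z" for z
    using that hermitian_dense_range_injective[OF positive_op_hermitian[OF YB YP]
        inverts_on_dense_range[OF D inverse]] by (simp add: T_def)
  note partial_sums = funpow_partial_sums_tendsto[OF TB TP T_contraction this]
  define X where "X n x = (\<Sum>k\<in>{1..n}. (T ^^ k) x)" for n x
  have XM: "X n \<in> M" for n unfolding X_def by (intro M_sum M_funpow \<open>T \<in> M\<close>) simp
  have XP: "positive_op (X n)" for n
    using positive_op_funpow[OF TB TP]
    by (simp add: positive_op_def X_def cinner_sum_right sum_nonneg)
  have powers_commute: "(T ^^ k) ((T ^^ j) x) = (T ^^ j) ((T ^^ k) x)" for k j x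
    by (metis add.commute comp_apply funpow_add)
  have X_commute: "X n \<circ> X m = X m \<circ> X n" for n m
    by (simp add: fun_eq_iff X_def bounded_clinear_op_sum[OF bounded_clinear_op_funpow[OF TB]])
      (subst sum.swap, simp add: powers_commute)
  have lim: "(\<lambda>n. X n \<xi>) \<longlonglongrightarrow> A \<xi>" if "\<xi> \<in> D" for \<xi>
  proof -
    have "T (\<xi> + A \<xi>) = A \<xi>" using inverse that by (simp add: inverts_on_def T_def)
    then show ?thesis using partial_sums[of "\<xi> + A \<xi>"] by (simp add: X_def)
  qed
  have adj_X: "adj D (X n) \<xi> = X n \<xi>" for n \<xi>
    by (rule adj_positive_op[OF D M_bounded[OF XM] XP])
  have adj_A: "adj D A \<xi> = A \<xi>" if "\<xi> \<in> D" for \<xi>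
  proof (rule adj_eqI[OF D], intro ballI)
    fix \<eta> assume "\<eta> \<in> D"
    show "cinner (A \<eta>) \<xi> = cinner \<eta> (A \<xi>)"
      by (rule hermitian_net_limit_symmetric[OF sequentially_bot _ lim[OF that] lim[OF \<open>\<eta> \<in> D\<close>]])
        (simp add: positive_op_hermitian[OF M_bounded[OF XM] XP])
  qed
  show ?thesis
    unfolding tau_closure_cq_pos_def tau_s_star_limit_of_def
  proof (intro CollectI exI[of _ "range X"] conjI exI[of _ "filtermap X sequentially"])
    show "\<forall>\<xi>\<in>D. ((\<lambda>Z. Z \<xi>) \<longlongrightarrow> A \<xi>) (filtermap X sequentially)
        \<and> ((\<lambda>Z. adj D Z \<xi>) \<longlongrightarrow> adj D A \<xi>) (filtermap X sequentially)"
      using lim adj_A by (simp add: filterlim_filtermap adj_X)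
  qed (use XM XP X_commute A_Ldag in \<open>auto simp: filtermap_sequentually_ne_bot eventually_filtermap\<close>)
qed

lemma inverts_if_cq_pos:
  assumes "A \<in> tau_closure_cq_pos D M"
  shows "\<exists>Y\<in>unit_ball_pos M. inverts_on D A Y"
proof -
  obtain S F where S: "S \<subseteq> M" "\<forall>X\<in>S. positive_op X" "\<forall>X\<in>S. \<forall>Z\<in>S. X \<circ> Z = Z \<circ> X"
    and F: "F \<noteq> bot" "eventually (\<lambda>X. X \<in> S) F" "\<And>\<xi>. \<xi> \<in> D \<Longrightarrow> ((\<lambda>X. X \<xi>) \<longlongrightarrow> A \<xi>) F"
    using assms by (auto simp: tau_closure_cq_pos_def tau_s_star_limit_of_def)
  show ?thesis
    using resolvent_net_limit_in_unit_ball[OF S F] resolvent_net_limit_inverts[OF S F] by blast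
qed

end

theorem corollary4p4:
  fixes D :: "'h::cplx_hilbert set" and M0 :: "('h \<Rightarrow> 'h) set" and A :: "'h \<Rightarrow> 'h"
  assumes "dense_subspace D"
    and "unital_cstar_algebra M0"
    and "\<forall>X\<in>M0. \<forall>\<xi>\<in>D. X \<xi> \<in> D"
    and "A \<in> tau_closure D (bicommutant M0)"
    and "\<forall>X\<in>bicommutant M0. \<forall>\<xi>\<in>D. X \<xi> \<in> D"
  shows "(A \<in> tau_closure_cq_pos D (bicommutant M0)
          \<longleftrightarrow> (\<exists>Y\<in>unit_ball_pos (bicommutant M0).
                 (\<forall>\<xi>\<in>D. Y \<xi> + A (Y \<xi>) = \<xi>) \<and> (\<forall>\<xi>\<in>D. Y (\<xi> + A \<xi>) = \<xi>)))
       \<and> ((\<exists>Y\<in>unit_ball_pos (bicommutant M0).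
                 (\<forall>\<xi>\<in>D. Y \<xi> + A (Y \<xi>) = \<xi>) \<and> (\<forall>\<xi>\<in>D. Y (\<xi> + A \<xi>) = \<xi>))
          \<longleftrightarrow> positive_selfadjoint_graph (op_closure_graph D A))"
proof -
  interpret tau_closure_element D M0 A
    using assms(1,2,4,5) by unfold_locales
  have "A \<in> tau_closure_cq_pos D M \<longleftrightarrow> (\<exists>Y\<in>unit_ball_pos M. inverts_on D A Y)"
    using inverts_if_cq_pos cq_pos_if_inverts by blast
  moreover have "(\<exists>Y\<in>unit_ball_pos M. inverts_on D A Y)
      \<longleftrightarrow> positive_selfadjoint_graph (op_closure_graph D A)"
    using positive_selfadjoint_closure_if_inverts inverts_if_positive_selfadjoint_closure by blast
  ultimately show ?thesis by (simp add: inverts_on_def)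
qed

end
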